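(* Let $H=(V,E)$ be a hypergraph. Then: (1) $H$ has an Euler family if and only if each block of $H$ has an Euler family. (2) $H$ has an Euler tour if and only if each block $B$ of $H$ has an Euler tour that traverses (as an anchor) every separating vertex of $H$ contained in $B$.
   Context: A hypergraph $H=(V,E)$ consists of a finite nonempty vertex set $V$, a finite edge set $E$ disjoint from $V$, and an incidence function assigning to each edge $e\in E$ a subset of $V$ (also denoted $e$); distinct edges may have the same vertex set. Hypergraphs are assumed to have no empty edges. A hypersubgraph of $H$ is a hypergraph $(V',E')$ with $V'\subseteq V$, $E'\subseteq E$ (each $e\in E'$ contained in $V'$). $H$ decomposes into hypersubgraphs $H_1,H_2$ if $E$ is the disjoint union of $E(H_1)$ and $E(H_2)$. A walk is a sequence $W=v_0e_1v_1e_2\cdots e_kv_k$ with $v_i\in V$, $e_i\in E$, such that for each $i$, $v_{i-1}\ne v_i$ and $v_{i-1},v_i\in e_i$; the $v_i$ are its anchors. $W$ is closed if $k\ge 2$ and $v_0=v_k$; it is a strict trail if $e_1,\dots,e_k$ are pairwise distinct. A hypergraph is connected if any two distinct vertices are joined by a walk. An Euler tour is a closed strict trail traversing every edge; an Euler family is a family of closed strict trails such that every edge lies in exactly one trail and no two trails have a common anchor. In a connected hypergraph $H$, a vertex $v$ is a separating vertex if $H$ decomposes into two connected hypersubgraphs $H_1,H_2$, each with at least one edge, with $V(H_1)\cap V(H_2)=\{v\}$; for general $H$, separating vertices are those of its connected components. A hypergraph is non-separable if it is connected, has no empty edges, and has no separating vertex; a block of $H$ is a maximal non-separable hypersubgraph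 of $H$.
   Formalization: Part (2), the equivalence for Euler tours, is asserted only for connected H. The statement above fails without it. *)

theory Defs
  imports Main
begin

text \<open>A hypergraph is given by a vertex set V, an edge set E (of a separate type,
hence disjoint from V) and an incidence function inc.  Hypersubgraphs share the
incidence function of the ambient hypergraph.\<close>

definition hypergraph :: "'v set \<Rightarrow> 'e set \<Rightarrow> ('e \<Rightarrow> 'v set) \<Rightarrow> bool" where
  "hypergraph V E inc \<longleftrightarrow> finite V \<and> V \<noteq> {} \<and> finite E \<and>
     (\<forall>e\<in>E. inc e \<subseteq> V \<and> inc e \<noteq> {})"

definition hypersubgraph ::
  "'v set \<Rightarrow> 'e set \<Rightarrow> 'v set \<Rightarrow> 'e set \<Rightarrow> ('e \<Rightarrow> 'v set) \<Rightarrow> bool" where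
  "hypersubgraph V' E' V E inc \<longleftrightarrow> hypergraph V' E' inc \<and> V' \<subseteq> V \<and> E' \<subseteq> E"

text \<open>A walk v0 e1 v1 ... ek vk is given by the anchor list vs = [v0,...,vk]
and the edge list es = [e1,...,ek].\<close>

definition walk :: "'v set \<Rightarrow> 'e set \<Rightarrow> ('e \<Rightarrow> 'v set) \<Rightarrow> 'v list \<Rightarrow> 'e list \<Rightarrow> bool" where
  "walk V E inc vs es \<longleftrightarrow> length vs = Suc (length es) \<and> set vs \<subseteq> V \<and>
     (\<forall>i<length es. es ! i \<in> E \<and> vs ! i \<noteq> vs ! Suc i \<and>
        vs ! i \<in> inc (es ! i) \<and> vs ! Suc i \<in> inc (es ! i))"

definition closed_walk :: "'v list \<Rightarrow> 'e list \<Rightarrow> bool" where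
  "closed_walk vs es \<longleftrightarrow> length es \<ge> 2 \<and> hd vs = last vs"

definition closed_strict_trail ::
  "'v set \<Rightarrow> 'e set \<Rightarrow> ('e \<Rightarrow> 'v set) \<Rightarrow> 'v list \<Rightarrow> 'e list \<Rightarrow> bool" where
  "closed_strict_trail V E inc vs es \<longleftrightarrow>
     walk V E inc vs es \<and> closed_walk vs es \<and> distinct es"

definition euler_tour ::
  "'v set \<Rightarrow> 'e set \<Rightarrow> ('e \<Rightarrow> 'v set) \<Rightarrow> 'v list \<Rightarrow> 'e list \<Rightarrow> bool" where
  "euler_tour V E inc vs es \<longleftrightarrow> closed_strict_trail V E inc vs es \<and> set es = E"

definition has_euler_tour :: "'v set \<Rightarrow> 'e set \<Rightarrow> ('e \<Rightarrow> 'v set) \<Rightarrow> bool" where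
  "has_euler_tour V E inc \<longleftrightarrow> (\<exists>vs es. euler_tour V E inc vs es)"

definition euler_family ::
  "'v set \<Rightarrow> 'e set \<Rightarrow> ('e \<Rightarrow> 'v set) \<Rightarrow> ('v list \<times> 'e list) set \<Rightarrow> bool" where
  "euler_family V E inc F \<longleftrightarrow>
     (\<forall>T\<in>F. closed_strict_trail V E inc (fst T) (snd T)) \<and>
     (\<forall>e\<in>E. \<exists>!T\<in>F. e \<in> set (snd T)) \<and>
     (\<forall>T1\<in>F. \<forall>T2\<in>F. T1 \<noteq> T2 \<longrightarrow> set (fst T1) \<inter> set (fst T2) = {})"

definition has_euler_family :: "'v set \<Rightarrow> 'e set \<Rightarrow> ('e \<Rightarrow> 'v set) \<Rightarrow> bool" where
  "has_euler_family V E inc \<longleftrightarrow> (\<exists>F. euler_family V E inc F)"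

definition hconnected :: "'v set \<Rightarrow> 'e set \<Rightarrow> ('e \<Rightarrow> 'v set) \<Rightarrow> bool" where
  "hconnected V E inc \<longleftrightarrow>
     (\<forall>u\<in>V. \<forall>v\<in>V. u \<noteq> v \<longrightarrow>
        (\<exists>vs es. walk V E inc vs es \<and> hd vs = u \<and> last vs = v))"

definition separating_vertex_conn ::
  "'v set \<Rightarrow> 'e set \<Rightarrow> ('e \<Rightarrow> 'v set) \<Rightarrow> 'v \<Rightarrow> bool" where
  "separating_vertex_conn V E inc v \<longleftrightarrow>
     (\<exists>V1 E1 V2 E2.
        hypersubgraph V1 E1 V E inc \<and> hypersubgraph V2 E2 V E inc \<and>
        hconnected V1 E1 inc \<and> hconnected V2 E2 inc \<and>
        E1 \<noteq> {} \<and> E2 \<noteq> {} \<and> E1 \<union> E2 = E \<and> E1 \<inter> E2 = {} \<and>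
        V1 \<inter> V2 = {v})"

definition component ::
  "'v set \<Rightarrow> 'e set \<Rightarrow> ('e \<Rightarrow> 'v set) \<Rightarrow> 'v set \<Rightarrow> 'e set \<Rightarrow> bool" where
  "component V E inc V' E' \<longleftrightarrow>
     hypersubgraph V' E' V E inc \<and> hconnected V' E' inc \<and>
     (\<forall>V'' E''. hypersubgraph V'' E'' V E inc \<and> hconnected V'' E'' inc \<and>
        V' \<subseteq> V'' \<and> E' \<subseteq> E'' \<longrightarrow> V'' = V' \<and> E'' = E')"

definition separating_vertex ::
  "'v set \<Rightarrow> 'e set \<Rightarrow> ('e \<Rightarrow> 'v set) \<Rightarrow> 'v \<Rightarrow> bool" where
  "separating_vertex V E inc v \<longleftrightarrow>
     (\<exists>V' E'. component V E inc V' E' \<and> separating_vertex_conn V' E' inc v)"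

definition non_separable :: "'v set \<Rightarrow> 'e set \<Rightarrow> ('e \<Rightarrow> 'v set) \<Rightarrow> bool" where
  "non_separable V E inc \<longleftrightarrow>
     hconnected V E inc \<and> (\<forall>e\<in>E. inc e \<noteq> {}) \<and>
     \<not> (\<exists>v. separating_vertex V E inc v)"

definition block ::
  "'v set \<Rightarrow> 'e set \<Rightarrow> ('e \<Rightarrow> 'v set) \<Rightarrow> 'v set \<Rightarrow> 'e set \<Rightarrow> bool" where
  "block V E inc VB EB \<longleftrightarrow>
     hypersubgraph VB EB V E inc \<and> non_separable VB EB inc \<and>
     (\<forall>V' E'. hypersubgraph V' E' V E inc \<and> non_separable V' E' inc \<and>
        VB \<subseteq> V' \<and> EB \<subseteq> E' \<longrightarrow> V' = VB \<and> E' = EB)"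

end

theory Submission
  imports Defs
begin

text \<open>
  A vertex v of a connected hypergraph is separating exactly when its edges fall into several
  classes of the relation "share a vertex other than v", so blocks are the maximal edge sets that
  form a single class for every v. Distinct blocks share no edge, and no two vertices of a block
  are linked outside it: a shortest such link could be added to the block. Hence a closed trail
  restricted to the edges of a block is still a closed trail, and a tour crossing a separation at
  v passes through v. Conversely, closed trails of different blocks can be spliced at common
  anchors until the family is anchor-disjoint; for tours, every vertex shared by two blocks is
  separating, hence an anchor of both block tours, so in a connected hypergraph the splicing ends
  with a single closed trail.
\<close>

section \<open>Linkage through shared edges\<close>

definition share_edge :: "('e \<Rightarrow> 'v set) \<Rightarrow> 'e set \<Rightarrow> ('v \<times> 'v) set" where
  "share_edge inc S = {(a, b). \<exists>e\<in>S. a \<in> inc e \<and> b \<in> inc e}"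

abbreviation linked :: "('e \<Rightarrow> 'v set) \<Rightarrow> 'e set \<Rightarrow> ('v \<times> 'v) set" where
  "linked inc S \<equiv> (share_edge inc S)\<^sup>*"

lemma linked_mono: "S \<subseteq> T \<Longrightarrow> (a, b) \<in> linked inc S \<Longrightarrow> (a, b) \<in> linked inc T"
  by (rule subsetD[OF rtrancl_mono]) (auto simp: share_edge_def)

lemma linked_sym: "(a, b) \<in> linked inc S \<Longrightarrow> (b, a) \<in> linked inc S"
  by (rule symD[OF sym_rtrancl]) (auto simp: share_edge_def sym_def)

lemma linked_edge: "e \<in> S \<Longrightarrow> a \<in> inc e \<Longrightarrow> b \<in> inc e \<Longrightarrow> (a, b) \<in> linked inc S"
  unfolding share_edge_def by blast

lemma linked_empty: "(a, b) \<in> linked inc {} \<Longrightarrow> a = b"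
  by (simp add: share_edge_def)

lemma linked_vertex: "(a, b) \<in> linked inc S \<Longrightarrow> a \<noteq> b \<Longrightarrow> b \<in> \<Union>(inc ` S)"
  by (induction rule: rtrancl_induct) (auto simp: share_edge_def)

lemma linked_closed:
  assumes "(a, b) \<in> linked inc S" "a \<in> W" "\<And>e. e \<in> S \<Longrightarrow> inc e \<inter> W \<noteq> {} \<Longrightarrow> inc e \<subseteq> W"
  shows "b \<in> W"
  using assms(1,2) by (induction rule: rtrancl_induct) (auto simp: share_edge_def dest: assms(3))

lemma hd_last_conv_nth: "length vs = Suc n \<Longrightarrow> hd vs = vs ! 0 \<and> last vs = vs ! n"
  by (cases vs) (auto simp: last_conv_nth)

lemma walk_snoc:
  assumes "walk V S inc vs es" "last vs = b" "b \<noteq> c" "b \<in> inc e" "c \<in> inc e" "e \<in> S" "c \<in> V"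
  shows "walk V S inc (vs @ [c]) (es @ [e])"
proof -
  have len: "length vs = Suc (length es)" using assms(1) unfolding walk_def by auto
  then have "vs ! length es = b" using assms(2) hd_last_conv_nth by metis
  then show ?thesis using assms len unfolding walk_def
    by (auto simp: nth_append less_Suc_eq)
qed

lemma linked_imp_walk:
  assumes "(a, b) \<in> linked inc S" "\<forall>e\<in>S. inc e \<subseteq> V" "a \<in> V"
  shows "a = b \<or> (\<exists>vs es. walk V S inc vs es \<and> hd vs = a \<and> last vs = b)"
  using assms(1)
proof (induction rule: rtrancl_induct)
  case (step b c)
  from step.hyps(2) obtain e where e: "e \<in> S" "b \<in> inc e" "c \<in> inc e"
    unfolding share_edge_def by blast
  with assms(2) have cV: "c \<in> V" by blast
  consider "b = c" | "b \<noteq> c" "a = b"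
    | vs es where "b \<noteq> c" "walk V S inc vs es" "hd vs = a" "last vs = b"
    using step.IH by (elim disjE exE) auto
  then show ?case
  proof cases
    case 2
    with e cV assms(3) have "walk V S inc [a, c] [e]"
      unfolding walk_def by (auto simp: nth_Cons split: nat.splits)
    then show ?thesis using 2 by (metis last_ConsL last_ConsR list.sel(1) not_Cons_self2)
  next
    case 3
    have "vs \<noteq> []" using 3(2) unfolding walk_def by auto
    then have "hd (vs @ [c]) = a" using 3(3) by simp
    then show ?thesis using walk_snoc[OF 3(2,4,1) e(2,3,1) cV] by auto
  qed (use step.IH in simp)
qed simp

lemma walk_imp_linked:
  assumes "walk V S inc vs es"
  shows "(hd vs, last vs) \<in> linked inc S"
proof -
  have len: "length vs = Suc (length es)" using assms unfolding walk_def by auto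
  have "(vs ! 0, vs ! i) \<in> linked inc S" if "i \<le> length es" for i
    using that
  proof (induction i)
    case (Suc i)
    then have "(vs ! i, vs ! Suc i) \<in> share_edge inc S"
      using assms unfolding walk_def share_edge_def by (auto simp: Suc_le_eq)
    with Suc show ?case by (meson Suc_leD rtrancl.rtrancl_into_rtrancl)
  qed simp
  moreover have "hd vs = vs ! 0" "last vs = vs ! length es"
    using hd_last_conv_nth[OF len] by simp_all
  ultimately show ?thesis by simp
qed

lemma hconnected_linked:
  assumes "hconnected V E inc" "a \<in> V" "b \<in> V"
  shows "(a, b) \<in> linked inc E"
proof (cases "a = b")
  case False
  then obtain vs es where "walk V E inc vs es" "hd vs = a" "last vs = b"
    using assms unfolding hconnected_def by blast
  then show ?thesis using walk_imp_linked by fastforce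
qed simp

lemma linked_imp_hconnected:
  assumes "\<forall>e\<in>E. inc e \<subseteq> V" "\<forall>a\<in>V. \<forall>b\<in>V. (a, b) \<in> linked inc E"
  shows "hconnected V E inc"
  unfolding hconnected_def
proof (intro ballI impI)
  fix a b assume "a \<in> V" "b \<in> V" "a \<noteq> b"
  with linked_imp_walk[of a b inc E V] assms
  show "\<exists>vs es. walk V E inc vs es \<and> hd vs = a \<and> last vs = b" by blast
qed

lemma hconnected_vertices:
  assumes "hypergraph V E inc" "hconnected V E inc" "E \<noteq> {}"
  shows "V = \<Union>(inc ` E)"
proof
  obtain e w where w: "e \<in> E" "w \<in> inc e"
    using assms(1,3) unfolding hypergraph_def by blast
  show "V \<subseteq> \<Union>(inc ` E)"
  proof
    fix z assume "z \<in> V"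
    moreover have "w \<in> V" using w assms(1) unfolding hypergraph_def by blast
    ultimately have "(w, z) \<in> linked inc E" using hconnected_linked[OF assms(2)] by blast
    then show "z \<in> \<Union>(inc ` E)" using w linked_vertex by fastforce
  qed
qed (use assms(1) in \<open>auto simp: hypergraph_def\<close>)

lemma hconnected_partition_meet:
  assumes H: "hypergraph V E inc" "hconnected V E inc"
    and AB: "A \<union> B = E" "A \<inter> B = {}" "A \<noteq> {}" "B \<noteq> {}"
  shows "\<Union>(inc ` A) \<inter> \<Union>(inc ` B) \<noteq> {}"
proof
  assume disj: "\<Union>(inc ` A) \<inter> \<Union>(inc ` B) = {}"
  have edge: "e \<in> E \<Longrightarrow> inc e \<noteq> {} \<and> inc e \<subseteq> V" for e
    using H(1) unfolding hypergraph_def by blast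
  obtain ea eb where "ea \<in> A" "eb \<in> B" using AB by blast
  moreover from this have "ea \<in> E" "eb \<in> E" using AB by blast+
  ultimately obtain a b where a: "ea \<in> A" "a \<in> inc ea" "a \<in> V"
    and b: "eb \<in> B" "b \<in> inc eb" "b \<in> V"
    using edge by blast
  have "(a, b) \<in> linked inc E" using hconnected_linked[OF H(2) a(3) b(3)] .
  moreover have "a \<in> \<Union>(inc ` A)" using a by blast
  moreover have "inc e \<subseteq> \<Union>(inc ` A)" if "e \<in> E" "inc e \<inter> \<Union>(inc ` A) \<noteq> {}" for e
    using that AB disj by blast
  ultimately have "b \<in> \<Union>(inc ` A)" by (rule linked_closed)
  with disj b show False by blast
qed

lemma hypersubgraph_edges:
  assumes "hypergraph V E inc" "S \<subseteq> E" "S \<noteq> {}"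
  shows "hypersubgraph (\<Union>(inc ` S)) S V E inc"
proof -
  have "finite S" "\<Union>(inc ` S) \<subseteq> V" "\<Union>(inc ` S) \<noteq> {}" "\<forall>e\<in>S. inc e \<noteq> {}"
    using assms finite_subset unfolding hypergraph_def by blast+
  moreover have "finite (\<Union>(inc ` S))" using calculation(2) assms(1) finite_subset
    unfolding hypergraph_def by blast
  ultimately show ?thesis using assms(2) unfolding hypersubgraph_def hypergraph_def by blast
qed

text \<open>Leaving W along P2 and coming back is only possible through v.\<close>

lemma linked_Un_restrict:
  assumes "(a, b) \<in> linked inc (P1 \<union> P2)" "a \<in> W" "b \<in> W"
    and P1: "\<Union>(inc ` P1) \<subseteq> W" and P2: "\<Union>(inc ` P2) \<inter> W \<subseteq> {v}"
  shows "(a, b) \<in> linked inc P1"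
proof -
  have "(a, c) \<in> linked inc P1 \<and> c \<in> W \<or> c \<in> \<Union>(inc ` P2) \<and> (a, v) \<in> linked inc P1"
    if "(a, c) \<in> linked inc (P1 \<union> P2)" for c
    using that
  proof (induction rule: rtrancl_induct)
    case (step c d)
    from step.hyps(2) obtain g where g: "g \<in> P1 \<union> P2" "c \<in> inc g" "d \<in> inc g"
      unfolding share_edge_def by blast
    show ?case
    proof (cases "g \<in> P1")
      case True
      with g P1 have cd: "c \<in> W" "d \<in> W" "(c, d) \<in> linked inc P1"
        using linked_edge[of g P1 c inc d] by blast+
      from step.IH have "(a, c) \<in> linked inc P1"
      proof
        assume "c \<in> \<Union>(inc ` P2) \<and> (a, v) \<in> linked inc P1"
        with cd(1) P2 show ?thesis by blast
      qed blast
      with cd show ?thesis by (meson rtrancl_trans)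
    next
      case False
      with g have cd: "c \<in> \<Union>(inc ` P2)" "d \<in> \<Union>(inc ` P2)" by blast+
      from step.IH have "(a, v) \<in> linked inc P1"
      proof
        assume "(a, c) \<in> linked inc P1 \<and> c \<in> W"
        with cd(1) P2 show ?thesis by blast
      qed blast
      with cd(2) show ?thesis by blast
    qed
  qed (use assms(2) in simp)
  from this[OF assms(1)] assms(3) P2 show ?thesis by blast
qed

section \<open>Separating vertices\<close>

definition overlap_except :: "('e \<Rightarrow> 'v set) \<Rightarrow> 'e set \<Rightarrow> 'v \<Rightarrow> ('e \<times> 'e) set" where
  "overlap_except inc S v = {(g, h). g \<in> S \<and> h \<in> S \<and> (\<exists>z. z \<noteq> v \<and> z \<in> inc g \<and> z \<in> inc h)}"

definition overlap_class :: "('e \<Rightarrow> 'v set) \<Rightarrow> 'e set \<Rightarrow> 'v \<Rightarrow> 'e \<Rightarrow> 'e set" where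
  "overlap_class inc S v g = {h \<in> S. (g, h) \<in> (overlap_except inc S v)\<^sup>*}"

definition overlap_connected :: "('e \<Rightarrow> 'v set) \<Rightarrow> 'e set \<Rightarrow> 'v \<Rightarrow> bool" where
  "overlap_connected inc S v \<longleftrightarrow> (\<forall>g\<in>S. \<forall>h\<in>S. (g, h) \<in> (overlap_except inc S v)\<^sup>*)"

lemma overlap_sym:
  "(g, h) \<in> (overlap_except inc S v)\<^sup>* \<Longrightarrow> (h, g) \<in> (overlap_except inc S v)\<^sup>*"
  by (rule symD[OF sym_rtrancl]) (auto simp: overlap_except_def sym_def)

lemma overlap_mono:
  "S \<subseteq> T \<Longrightarrow> (g, h) \<in> (overlap_except inc S v)\<^sup>* \<Longrightarrow> (g, h) \<in> (overlap_except inc T v)\<^sup>*"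
  by (rule subsetD[OF rtrancl_mono]) (auto simp: overlap_except_def)

lemma overlap_mem: "(g, h) \<in> (overlap_except inc S v)\<^sup>* \<Longrightarrow> g \<in> S \<Longrightarrow> h \<in> S"
  by (induction rule: rtrancl_induct) (auto simp: overlap_except_def)

lemma overlap_class_self: "g \<in> S \<Longrightarrow> g \<in> overlap_class inc S v g"
  unfolding overlap_class_def by simp

lemma overlap_class_subset: "overlap_class inc S v g \<subseteq> S"
  unfolding overlap_class_def by blast

lemma overlap_class_eq:
  assumes "h \<in> overlap_class inc S v g"
  shows "overlap_class inc S v h = overlap_class inc S v g"
proof -
  have "(g, h) \<in> (overlap_except inc S v)\<^sup>*" using assms unfolding overlap_class_def by blast
  moreover note overlap_sym[OF this]
  ultimately have "(h, k) \<in> (overlap_except inc S v)\<^sup>* \<longleftrightarrow> (g, k) \<in> (overlap_except inc S v)\<^sup>*"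
    for k by (meson rtrancl_trans)
  then show ?thesis unfolding overlap_class_def by blast
qed

lemma overlap_connected_class:
  "overlap_connected inc S v \<Longrightarrow> g \<in> S \<Longrightarrow> overlap_class inc S v g = S"
  unfolding overlap_connected_def overlap_class_def by blast

lemma overlap_connected_if_class:
  assumes "overlap_class inc S v g = S"
  shows "overlap_connected inc S v"
  unfolding overlap_connected_def
proof (intro ballI)
  fix h k assume "h \<in> S" "k \<in> S"
  then have "(g, h) \<in> (overlap_except inc S v)\<^sup>*" "(g, k) \<in> (overlap_except inc S v)\<^sup>*"
    using assms unfolding overlap_class_def by blast+
  then show "(h, k) \<in> (overlap_except inc S v)\<^sup>*" by (meson overlap_sym rtrancl_trans)
qed

lemma overlap_connected_Un:
  assumes "overlap_connected inc A v" "overlap_connected inc B v" "e \<in> A" "e \<in> B"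
  shows "overlap_connected inc (A \<union> B) v"
proof (rule overlap_connected_if_class[of inc _ v e])
  have "(e, h) \<in> (overlap_except inc (A \<union> B) v)\<^sup>*" if "h \<in> A \<union> B" for h
  proof (cases "h \<in> A")
    case True
    with assms(1,3) have "(e, h) \<in> (overlap_except inc A v)\<^sup>*"
      unfolding overlap_connected_def by blast
    then show ?thesis by (rule overlap_mono[rotated]) blast
  next
    case False
    with that assms(2,4) have "(e, h) \<in> (overlap_except inc B v)\<^sup>*"
      unfolding overlap_connected_def by blast
    then show ?thesis by (rule overlap_mono[rotated]) blast
  qed
  then show "overlap_class inc (A \<union> B) v e = A \<union> B" unfolding overlap_class_def by blast
qed

lemma overlap_class_boundary:
  assumes "h1 \<in> overlap_class inc S v g" "h2 \<in> S - overlap_class inc S v g"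
    "z \<in> inc h1" "z \<in> inc h2"
  shows "z = v"
proof (rule ccontr)
  assume "z \<noteq> v"
  with assms have "(h1, h2) \<in> overlap_except inc S v"
    unfolding overlap_except_def overlap_class_def by blast
  with assms(1,2) show False
    unfolding overlap_class_def by (blast intro: rtrancl_into_rtrancl)
qed

lemma overlap_class_linked:
  assumes "h \<in> overlap_class inc S v g" "z \<in> inc g" "w \<in> inc h"
  shows "(z, w) \<in> linked inc (overlap_class inc S v g)"
proof -
  have gh: "(g, h) \<in> (overlap_except inc S v)\<^sup>*" and "h \<in> S"
    using assms(1) unfolding overlap_class_def by auto
  then have g: "g \<in> S" using overlap_mem[OF overlap_sym[OF gh]] by blast
  from gh show ?thesis using assms(3)
  proof (induction arbitrary: w rule: rtrancl_induct)
    case base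
    then show ?case
      using linked_edge[where inc=inc, OF overlap_class_self[OF g, of inc v] assms(2)] by blast
  next
    case (step h h')
    from step.hyps(2) obtain y where y: "y \<in> inc h" "y \<in> inc h'"
      unfolding overlap_except_def by blast
    have "h' \<in> overlap_class inc S v g"
      using rtrancl_into_rtrancl[OF step.hyps] overlap_mem[OF rtrancl_into_rtrancl[OF step.hyps] g]
      unfolding overlap_class_def by blast
    then have "(y, w) \<in> linked inc (overlap_class inc S v g)"
      using linked_edge[where inc=inc] y(2) step.prems by blast
    moreover have "(z, y) \<in> linked inc (overlap_class inc S v g)"
      using step.IH y(1) .
    ultimately show ?case by (rule rtrancl_trans[rotated])
  qed
qed

lemma overlap_class_hconnected:
  "hconnected (\<Union>(inc ` overlap_class inc S v g)) (overlap_class inc S v g) inc"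
proof (rule linked_imp_hconnected)
  show "\<forall>a\<in>\<Union>(inc ` overlap_class inc S v g). \<forall>b\<in>\<Union>(inc ` overlap_class inc S v g).
      (a, b) \<in> linked inc (overlap_class inc S v g)"
  proof (intro ballI)
    fix a b assume "a \<in> \<Union>(inc ` overlap_class inc S v g)" "b \<in> \<Union>(inc ` overlap_class inc S v g)"
    then obtain h1 h2 where h: "h1 \<in> overlap_class inc S v g" "h2 \<in> overlap_class inc S v g"
      "a \<in> inc h1" "b \<in> inc h2" by blast
    then have "h2 \<in> overlap_class inc S v h1" using overlap_class_eq[OF h(1)] by simp
    from overlap_class_linked[OF this h(3,4)] show "(a, b) \<in> linked inc (overlap_class inc S v g)"
      using overlap_class_eq[OF h(1)] by simp
  qed
qed blast

lemma overlap_connected_hconnected: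
  assumes "overlap_connected inc S v"
  shows "hconnected (\<Union>(inc ` S)) S inc"
proof (cases "S = {}")
  case False
  then obtain g where "g \<in> S" by blast
  with overlap_class_hconnected[of inc S v g] show ?thesis
    using overlap_connected_class[OF assms] by simp
qed (simp add: hconnected_def walk_def)

lemma separating_conn_not_overlap_connected:
  assumes "separating_vertex_conn V E inc v"
  shows "\<not> overlap_connected inc E v"
proof
  assume conn: "overlap_connected inc E v"
  from assms obtain V1 E1 V2 E2 where d: "hypersubgraph V1 E1 V E inc" "hypersubgraph V2 E2 V E inc"
    "E1 \<noteq> {}" "E2 \<noteq> {}" "E1 \<union> E2 = E" "E1 \<inter> E2 = {}" "V1 \<inter> V2 = {v}"
    unfolding separating_vertex_conn_def by blast
  obtain e f where ef: "e \<in> E1" "f \<in> E2" using d by blast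
  have inc1: "g \<in> E1 \<Longrightarrow> inc g \<subseteq> V1" and inc2: "g \<in> E2 \<Longrightarrow> inc g \<subseteq> V2" for g
    using d(1,2) unfolding hypersubgraph_def hypergraph_def by blast+
  have "h \<in> E1" if "(e, h) \<in> (overlap_except inc E v)\<^sup>*" for h
    using that
  proof (induction rule: rtrancl_induct)
    case (step h h')
    then obtain z where z: "z \<noteq> v" "z \<in> inc h" "z \<in> inc h'" "h' \<in> E"
      unfolding overlap_except_def by blast
    show ?case
    proof (rule ccontr)
      assume "h' \<notin> E1"
      then have "z \<in> V1 \<inter> V2" using z step.IH inc1 inc2 d(5) by blast
      with z(1) d(7) show False by blast
    qed
  qed (use ef in simp)
  moreover have "(e, f) \<in> (overlap_except inc E v)\<^sup>*"
    using conn ef d(5) unfolding overlap_connected_def by blast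
  ultimately show False using ef d(6) by blast
qed

lemma overlap_class_linked_vertex:
  assumes H: "hypergraph V E inc" "hconnected V E inc"
    and g: "g \<in> E" "overlap_class inc E v g \<noteq> E" and u: "u \<in> inc g"
  shows "(u, v) \<in> linked inc (overlap_class inc E v g)"
proof -
  let ?C = "overlap_class inc E v g"
  have "?C \<subseteq> E" "g \<in> ?C" using overlap_class_subset overlap_class_self[OF g(1)] .
  then have "\<Union>(inc ` ?C) \<inter> \<Union>(inc ` (E - ?C)) \<noteq> {}"
    using hconnected_partition_meet[OF H, of ?C "E - ?C"] g(2) by blast
  then obtain z h1 h2 where z: "h1 \<in> ?C" "h2 \<in> E - ?C" "z \<in> inc h1" "z \<in> inc h2"
    by blast
  have "z = v" by (rule overlap_class_boundary[OF z])
  with overlap_class_linked[OF z(1) u z(3)] show ?thesis by simp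
qed

lemma overlap_class_disjoint:
  assumes "g \<in> S" "g \<notin> overlap_class inc S v e"
  shows "overlap_class inc S v g \<inter> overlap_class inc S v e = {}"
proof -
  have "overlap_class inc S v g \<noteq> overlap_class inc S v e"
    using assms overlap_class_self[of g S inc v] by blast
  then show ?thesis using overlap_class_eq[of _ inc S v g] overlap_class_eq[of _ inc S v e] by blast
qed

lemma overlap_complement_hconnected:
  fixes v :: 'v
  assumes H: "hypergraph V E inc" "hconnected V E inc" and e: "e \<in> E"
  defines "D \<equiv> E - overlap_class inc E v e"
  shows "hconnected (\<Union>(inc ` D)) D inc"
proof (rule linked_imp_hconnected)
  have to_v: "(a, v) \<in> linked inc D" if "a \<in> \<Union>(inc ` D)" for a
  proof -
    from that obtain g where g: "g \<in> D" "a \<in> inc g" by blast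
    then have gE: "g \<in> E" "g \<notin> overlap_class inc E v e" unfolding D_def by blast+
    then have sub: "overlap_class inc E v g \<subseteq> D"
      using overlap_class_disjoint[OF gE] overlap_class_subset[of inc E v g] unfolding D_def by blast
    have "e \<notin> D" using overlap_class_self[OF e, of inc v] unfolding D_def by blast
    then have "overlap_class inc E v g \<noteq> E" using sub e by blast
    from overlap_class_linked_vertex[OF H gE(1) this g(2)]
    show ?thesis by (rule linked_mono[OF sub])
  qed
  show "\<forall>a\<in>\<Union>(inc ` D). \<forall>b\<in>\<Union>(inc ` D). (a, b) \<in> linked inc D"
  proof (intro ballI)
    fix a b assume "a \<in> \<Union>(inc ` D)" "b \<in> \<Union>(inc ` D)"
    with to_v linked_sym[OF to_v] show "(a, b) \<in> linked inc D" by (blast intro: rtrancl_trans)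
  qed
qed blast

lemma not_overlap_connected_separating:
  assumes H: "hypergraph V E inc" "hconnected V E inc" and no: "\<not> overlap_connected inc E v"
  shows "separating_vertex_conn V E inc v"
proof -
  from no obtain e f where ef: "e \<in> E" "f \<in> E" "(e, f) \<notin> (overlap_except inc E v)\<^sup>*"
    unfolding overlap_connected_def by blast
  define E1 where "E1 = overlap_class inc E v e"
  define E2 where "E2 = E - E1"
  have "E1 \<subseteq> E" "e \<in> E1" unfolding E1_def
    by (rule overlap_class_subset, rule overlap_class_self[OF ef(1)])
  moreover have "f \<notin> E1" using ef(3) unfolding E1_def overlap_class_def by blast
  ultimately have E12: "E1 \<noteq> {}" "E2 \<noteq> {}" "E1 \<union> E2 = E" "E1 \<inter> E2 = {}"
    using ef(2) unfolding E2_def by blast+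
  have "hypersubgraph (\<Union>(inc ` E1)) E1 V E inc" "hypersubgraph (\<Union>(inc ` E2)) E2 V E inc"
    using hypersubgraph_edges[OF H(1), of E1] hypersubgraph_edges[OF H(1), of E2] E12 by blast+
  moreover have "hconnected (\<Union>(inc ` E1)) E1 inc" "hconnected (\<Union>(inc ` E2)) E2 inc"
    unfolding E1_def E2_def
    by (rule overlap_class_hconnected, rule overlap_complement_hconnected[OF H ef(1)])
  moreover have "\<Union>(inc ` E1) \<inter> \<Union>(inc ` E2) = {v}"
  proof (rule subset_antisym)
    show "\<Union>(inc ` E1) \<inter> \<Union>(inc ` E2) \<subseteq> {v}"
    proof
      fix z assume "z \<in> \<Union>(inc ` E1) \<inter> \<Union>(inc ` E2)"
      then obtain h1 h2 where "h1 \<in> E1" "h2 \<in> E2" "z \<in> inc h1" "z \<in> inc h2" by blast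
      then show "z \<in> {v}" using overlap_class_boundary[of h1 inc E v e h2 z]
        unfolding E1_def E2_def by blast
    qed
    with hconnected_partition_meet[OF H E12(3,4,1,2)]
    show "{v} \<subseteq> \<Union>(inc ` E1) \<inter> \<Union>(inc ` E2)" by blast
  qed
  ultimately show ?thesis
    unfolding separating_vertex_conn_def using E12 by (intro exI conjI) auto
qed

lemma component_self:
  assumes "hypergraph V E inc" "hconnected V E inc"
  shows "component V E inc V' E' \<longleftrightarrow> V' = V \<and> E' = E"
proof
  assume c: "component V E inc V' E'"
  then have "V' \<subseteq> V" "E' \<subseteq> E" unfolding component_def hypersubgraph_def by auto
  moreover have "hypersubgraph V E V E inc" using assms(1) unfolding hypersubgraph_def by simp
  ultimately show "V' = V \<and> E' = E" using c assms(2) unfolding component_def by blast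
qed (use assms in \<open>auto simp: component_def hypersubgraph_def\<close>)

lemma separating_vertex_iff_not_overlap_connected:
  assumes "hypergraph V E inc" "hconnected V E inc"
  shows "separating_vertex V E inc v \<longleftrightarrow> \<not> overlap_connected inc E v"
proof -
  have "separating_vertex V E inc v \<longleftrightarrow> separating_vertex_conn V E inc v"
    unfolding separating_vertex_def using component_self[OF assms] by auto
  also have "\<dots> \<longleftrightarrow> \<not> overlap_connected inc E v"
    using separating_conn_not_overlap_connected[of V E inc v]
      not_overlap_connected_separating[OF assms, of v] by blast
  finally show ?thesis .
qed

lemma non_separable_iff_overlap_connected:
  assumes "hypergraph V E inc" "hconnected V E inc"
  shows "non_separable V E inc \<longleftrightarrow> (\<forall>v. overlap_connected inc E v)"
proof -
  have "\<forall>e\<in>E. inc e \<noteq> {}" using assms(1) unfolding hypergraph_def by blast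
  then show ?thesis
    unfolding non_separable_def separating_vertex_iff_not_overlap_connected[OF assms]
    using assms(2) by blast
qed

lemma non_separable_edges:
  assumes "hypergraph V E inc" "S \<subseteq> E" "S \<noteq> {}" "\<And>v. overlap_connected inc S v"
  shows "hypersubgraph (\<Union>(inc ` S)) S V E inc" "non_separable (\<Union>(inc ` S)) S inc"
proof -
  show sub: "hypersubgraph (\<Union>(inc ` S)) S V E inc"
    by (rule hypersubgraph_edges[OF assms(1-3)])
  have "hconnected (\<Union>(inc ` S)) S inc" by (rule overlap_connected_hconnected[OF assms(4)])
  moreover have "hypergraph (\<Union>(inc ` S)) S inc" using sub unfolding hypersubgraph_def by blast
  ultimately show "non_separable (\<Union>(inc ` S)) S inc"
    using non_separable_iff_overlap_connected assms(4) by blast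
qed

section \<open>Blocks\<close>

lemma blockD:
  assumes "block V E inc VB EB"
  shows "hypersubgraph VB EB V E inc" "hypergraph VB EB inc" "hconnected VB EB inc"
    "overlap_connected inc EB v" "VB \<subseteq> V" "EB \<subseteq> E"
proof -
  show sub: "hypersubgraph VB EB V E inc" using assms unfolding block_def by blast
  then show hyp: "hypergraph VB EB inc" "VB \<subseteq> V" "EB \<subseteq> E" unfolding hypersubgraph_def by auto
  have ns: "non_separable VB EB inc" using assms unfolding block_def by blast
  then show conn: "hconnected VB EB inc" unfolding non_separable_def by blast
  show "overlap_connected inc EB v"
    using ns non_separable_iff_overlap_connected[OF hyp(1) conn] by blast
qed

lemma block_maximal:
  "block V E inc VB EB \<Longrightarrow> hypersubgraph V' E' V E inc \<Longrightarrow> non_separable V' E' inc \<Longrightarrow>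
    VB \<subseteq> V' \<Longrightarrow> EB \<subseteq> E' \<Longrightarrow> V' = VB \<and> E' = EB"
  unfolding block_def by blast

lemma block_vertices:
  assumes "block V E inc VB EB" "EB \<noteq> {}"
  shows "VB = \<Union>(inc ` EB)"
  using hconnected_vertices[OF blockD(2,3)[OF assms(1)] assms(2)] .

lemma block_edgeless:
  assumes "block V E inc VB {}"
  shows "\<exists>v. VB = {v}"
proof -
  obtain v where v: "v \<in> VB" using blockD(2)[OF assms] unfolding hypergraph_def by blast
  have "w = v" if "w \<in> VB" for w
    using linked_empty hconnected_linked[OF blockD(3)[OF assms] v that] by metis
  with v show ?thesis by blast
qed

lemma block_unique:
  assumes H: "hypergraph V E inc" and B1: "block V E inc VB1 EB1" and B2: "block V E inc VB2 EB2"
    and e: "e \<in> EB1" "e \<in> EB2"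
  shows "VB1 = VB2 \<and> EB1 = EB2"
proof -
  let ?S = "EB1 \<union> EB2"
  have "overlap_connected inc ?S v" for v
    using overlap_connected_Un[OF blockD(4)[OF B1] blockD(4)[OF B2] e] .
  moreover have "?S \<subseteq> E" "?S \<noteq> {}" using blockD(6)[OF B1] blockD(6)[OF B2] e by blast+
  ultimately have ns: "hypersubgraph (\<Union>(inc ` ?S)) ?S V E inc" "non_separable (\<Union>(inc ` ?S)) ?S inc"
    using non_separable_edges[OF H] by blast+
  have "VB1 \<subseteq> \<Union>(inc ` ?S)" "VB2 \<subseteq> \<Union>(inc ` ?S)"
    using block_vertices[OF B1] block_vertices[OF B2] e by blast+
  then show ?thesis
    using block_maximal[OF B1 ns] block_maximal[OF B2 ns] by blast
qed

lemma non_separable_in_block: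
  assumes H: "hypergraph V E inc" and sub: "hypersubgraph V' E' V E inc"
    and ns: "non_separable V' E' inc"
  shows "\<exists>VB EB. block V E inc VB EB \<and> V' \<subseteq> VB \<and> E' \<subseteq> EB"
proof -
  define Cand where "Cand X \<longleftrightarrow> hypersubgraph (fst X) (snd X) V E inc \<and>
    non_separable (fst X) (snd X) inc \<and> V' \<subseteq> fst X \<and> E' \<subseteq> snd X" for X
  define size :: "'a set \<times> 'b set \<Rightarrow> nat" where "size X = card (fst X) + card (snd X)" for X
  have fin: "finite V" "finite E" using H unfolding hypergraph_def by auto
  have size_less: "size Y < Suc (card V + card E)" if "Cand Y" for Y
  proof -
    have "fst Y \<subseteq> V" "snd Y \<subseteq> E" using that unfolding Cand_def hypersubgraph_def by auto
    then have "card (fst Y) \<le> card V" "card (snd Y) \<le> card E" using fin by (auto intro: card_mono)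
    then show ?thesis unfolding size_def by simp
  qed
  have "Cand (V', E')" unfolding Cand_def using sub ns by simp
  with size_less obtain X where X: "Cand X" and max: "\<And>Y. Cand Y \<Longrightarrow> size Y \<le> size X"
    using ex_has_greatest_nat[of Cand "(V', E')" size "Suc (card V + card E)"] by blast
  have "V'' = fst X \<and> E'' = snd X"
    if "hypersubgraph V'' E'' V E inc" "non_separable V'' E'' inc" "fst X \<subseteq> V''" "snd X \<subseteq> E''"
    for V'' E''
  proof -
    have "Cand (V'', E'')" using that X unfolding Cand_def by auto
    then have le: "card V'' + card E'' \<le> card (fst X) + card (snd X)"
      using max[of "(V'', E'')"] unfolding size_def by simp
    have fin'': "finite V''" "finite E''"
      using that(1) unfolding hypersubgraph_def hypergraph_def by auto
    then have "card (fst X) \<le> card V''" "card (snd X) \<le> card E''"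
      using that(3,4) by (auto intro: card_mono)
    with le have "card V'' \<le> card (fst X)" "card E'' \<le> card (snd X)" by linarith+
    then show ?thesis using card_seteq[OF fin''(1) that(3)] card_seteq[OF fin''(2) that(4)] by auto
  qed
  moreover have "hypersubgraph (fst X) (snd X) V E inc" "non_separable (fst X) (snd X) inc"
    "V' \<subseteq> fst X" "E' \<subseteq> snd X" using X unfolding Cand_def by auto
  ultimately have "block V E inc (fst X) (snd X)" unfolding block_def by blast
  with \<open>V' \<subseteq> fst X\<close> \<open>E' \<subseteq> snd X\<close> show ?thesis by blast
qed

lemma edge_in_block:
  assumes H: "hypergraph V E inc" and g: "g \<in> E"
  shows "\<exists>VB EB. block V E inc VB EB \<and> g \<in> EB"
proof -
  have "overlap_connected inc {g} v" for v by (simp add: overlap_connected_def)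
  then have "hypersubgraph (inc g) {g} V E inc" "non_separable (inc g) {g} inc"
    using non_separable_edges[OF H, of "{g}"] g by auto
  then show ?thesis using non_separable_in_block[OF H] by blast
qed

lemma block_exists:
  assumes H: "hypergraph V E inc"
  shows "\<exists>VB EB. block V E inc VB EB"
proof -
  obtain v where v: "v \<in> V" using H unfolding hypergraph_def by blast
  have "hypergraph {v} {} inc" by (simp add: hypergraph_def)
  moreover have "hconnected {v} {} inc" unfolding hconnected_def by blast
  ultimately have "non_separable {v} {} inc"
    using non_separable_iff_overlap_connected[of "{v}" "{}" inc] by (simp add: overlap_connected_def)
  moreover have "hypersubgraph {v} {} V E inc"
    using v H unfolding hypersubgraph_def hypergraph_def by auto
  ultimately show ?thesis using non_separable_in_block[OF H] by blast
qed

lemma block_edges_nonempty: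
  assumes H: "hypergraph V E inc" and B: "block V E inc VB EB"
    and v: "v \<in> VB" "g \<in> E" "v \<in> inc g"
  shows "EB \<noteq> {}"
proof
  assume EB: "EB = {}"
  then obtain w where "VB = {w}" using block_edgeless B by blast
  with v(1) have VB: "VB = {v}" by blast
  obtain VB' EB' where "block V E inc VB' EB'" "g \<in> EB'" using edge_in_block[OF H v(2)] by blast
  moreover have "v \<in> VB'" using calculation blockD(2) v(3) unfolding hypergraph_def by blast
  ultimately have "hypersubgraph VB' EB' V E inc" "non_separable VB' EB' inc" "VB \<subseteq> VB'" "EB \<subseteq> EB'"
    using VB EB unfolding block_def by blast+
  with block_maximal[OF B] \<open>g \<in> EB'\<close> EB show False by blast
qed

lemma overlap_connected_Un_minimal_link:
  assumes B: "overlap_connected inc B v" "e0 \<in> B"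
    and link: "x \<in> \<Union>(inc ` B)" "y \<in> \<Union>(inc ` B)" "(x, y) \<in> linked inc P"
    and minimal: "\<And>P'. P' \<subseteq> P \<Longrightarrow> (x, y) \<in> linked inc P' \<Longrightarrow> P' = P"
  shows "overlap_connected inc (B \<union> P) v"
proof (rule overlap_connected_if_class[of inc _ v e0])
  define Q where "Q = overlap_class inc (B \<union> P) v e0"
  have BQ: "B \<subseteq> Q"
  proof
    fix h assume "h \<in> B"
    with B have "(e0, h) \<in> (overlap_except inc B v)\<^sup>*" unfolding overlap_connected_def by blast
    then have "(e0, h) \<in> (overlap_except inc (B \<union> P) v)\<^sup>*" by (rule overlap_mono[rotated]) blast
    with \<open>h \<in> B\<close> show "h \<in> Q" unfolding Q_def overlap_class_def by blast
  qed
  have "\<Union>(inc ` (P - Q)) \<inter> \<Union>(inc ` Q) \<subseteq> {v}"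
  proof
    fix z assume "z \<in> \<Union>(inc ` (P - Q)) \<inter> \<Union>(inc ` Q)"
    then obtain h1 h2 where h: "h1 \<in> Q" "h2 \<in> (B \<union> P) - Q" "z \<in> inc h1" "z \<in> inc h2" by blast
    show "z \<in> {v}" using overlap_class_boundary[OF h[unfolded Q_def]] by simp
  qed
  moreover have "(x, y) \<in> linked inc ((P \<inter> Q) \<union> (P - Q))" using link(3) by (simp add: Int_Diff_Un)
  ultimately have "(x, y) \<in> linked inc (P \<inter> Q)"
    using linked_Un_restrict[of x y inc "P \<inter> Q" "P - Q" "\<Union>(inc ` Q)" v] link(1,2) BQ by blast
  then have "P \<subseteq> Q" using minimal[of "P \<inter> Q"] by blast
  with BQ show "overlap_class inc (B \<union> P) v e0 = B \<union> P"
    using overlap_class_subset[of inc "B \<union> P" v e0] unfolding Q_def by blast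
qed

text \<open>A shortest detour outside a block between two of its vertices could be added to it.\<close>

lemma block_no_outside_link:
  assumes H: "hypergraph V E inc" and B: "block V E inc VB EB"
    and xy: "x \<in> VB" "y \<in> VB" "x \<noteq> y" "(x, y) \<in> linked inc (E - EB)"
  shows False
proof -
  define Link where "Link P \<longleftrightarrow> P \<subseteq> E - EB \<and> (x, y) \<in> linked inc P" for P
  have "Link (E - EB)" using xy(4) unfolding Link_def by blast
  from ex_has_least_nat[of Link _ card, OF this]
  obtain P where P: "Link P" and least: "\<And>P'. Link P' \<Longrightarrow> card P \<le> card P'"
    by auto
  have fin: "finite P" using P H finite_subset unfolding Link_def hypergraph_def by blast
  have minimal: "P' = P" if "P' \<subseteq> P" "(x, y) \<in> linked inc P'" for P'
  proof -
    have "Link P'" using that P unfolding Link_def by blast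
    then show ?thesis using card_seteq[OF fin that(1) least] by blast
  qed
  have "EB \<noteq> {}"
  proof
    assume "EB = {}"
    then obtain w where "VB = {w}" using block_edgeless B by blast
    with xy(1-3) show False by blast
  qed
  then obtain e0 where e0: "e0 \<in> EB" by blast
  have VB: "VB = \<Union>(inc ` EB)" using block_vertices[OF B \<open>EB \<noteq> {}\<close>] .
  have "overlap_connected inc (EB \<union> P) v" for v
  proof (rule overlap_connected_Un_minimal_link[OF blockD(4)[OF B] e0])
    show "x \<in> \<Union>(inc ` EB)" "y \<in> \<Union>(inc ` EB)" using xy(1,2) VB by blast+
    show "(x, y) \<in> linked inc P" using P unfolding Link_def by blast
  qed (rule minimal)
  moreover have "EB \<union> P \<subseteq> E" "EB \<union> P \<noteq> {}" using P blockD(6)[OF B] e0 unfolding Link_def by blast+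
  ultimately have ns: "hypersubgraph (\<Union>(inc ` (EB \<union> P))) (EB \<union> P) V E inc"
      "non_separable (\<Union>(inc ` (EB \<union> P))) (EB \<union> P) inc"
    using non_separable_edges[OF H] by blast+
  have "VB \<subseteq> \<Union>(inc ` (EB \<union> P))" using VB by blast
  with block_maximal[OF B ns] have "P \<subseteq> EB" by blast
  then have "P = {}" using P unfolding Link_def by blast
  with P have "(x, y) \<in> linked inc {}" unfolding Link_def by blast
  with xy(3) show False by (auto dest: linked_empty)
qed

lemma block_shared_vertex_separating:
  assumes H: "hypergraph V E inc" "hconnected V E inc"
    and B: "block V E inc VB EB" and e: "e \<in> EB" "x \<in> inc e"
    and f: "f \<in> E" "f \<notin> EB" "x \<in> inc f"
  shows "separating_vertex V E inc x"
proof (rule ccontr)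
  assume "\<not> separating_vertex V E inc x"
  then have "overlap_connected inc E x" using separating_vertex_iff_not_overlap_connected[OF H] by blast
  moreover have eE: "e \<in> E" using e blockD(6)[OF B] by blast
  ultimately have ef: "(e, f) \<in> (overlap_except inc E x)\<^sup>*"
    using f(1) unfolding overlap_connected_def by blast
  have VB: "VB = \<Union>(inc ` EB)" using block_vertices[OF B] e(1) by blast
  have "h \<in> EB \<or> (\<exists>y\<in>VB. y \<noteq> x \<and> (\<forall>w\<in>inc h. (y, w) \<in> linked inc (E - EB)))"
    if "(e, h) \<in> (overlap_except inc E x)\<^sup>*" for h
    using that
  proof (induction rule: rtrancl_induct)
    case (step h h')
    from step.hyps(2) obtain z where z: "z \<noteq> x" "z \<in> inc h" "z \<in> inc h'" "h' \<in> E"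
      unfolding overlap_except_def by blast
    show ?case
    proof (cases "h' \<in> EB")
      case False
      then have zw: "(z, w) \<in> linked inc (E - EB)" if "w \<in> inc h'" for w
        using linked_edge[of h' "E - EB" z inc w] z(3,4) that by blast
      from step.IH obtain y where "y \<in> VB" "y \<noteq> x" "(y, z) \<in> linked inc (E - EB)"
        using z(1,2) VB by blast
      with zw show ?thesis by (blast intro: rtrancl_trans)
    qed simp
  qed (use e(1) in simp)
  from this[OF ef] f(2,3) obtain y where "y \<in> VB" "y \<noteq> x" "(y, x) \<in> linked inc (E - EB)"
    by blast
  moreover have "x \<in> VB" using VB e by blast
  ultimately show False using block_no_outside_link[OF H(1) B] by blast
qed

text \<open>A closed trail is handled as its list of steps (source, edge, target): rotating it,
  restricting it to the edges of a block and splicing two trails at a common anchor are then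
  plain list operations.\<close>

fun steps_chain :: "'v \<Rightarrow> ('v \<times> 'e \<times> 'v) list \<Rightarrow> 'v \<Rightarrow> bool" where
  "steps_chain a [] b \<longleftrightarrow> a = b"
| "steps_chain a ((u, e, w) # S) b \<longleftrightarrow> u = a \<and> steps_chain w S b"

definition step_edge :: "'v \<times> 'e \<times> 'v \<Rightarrow> 'e" where
  "step_edge s = fst (snd s)"

definition step_tgt :: "'v \<times> 'e \<times> 'v \<Rightarrow> 'v" where
  "step_tgt s = snd (snd s)"

definition valid_step :: "'v set \<Rightarrow> 'e set \<Rightarrow> ('e \<Rightarrow> 'v set) \<Rightarrow> 'v \<times> 'e \<times> 'v \<Rightarrow> bool" where
  "valid_step V E inc s \<longleftrightarrow> step_edge s \<in> E \<and> fst s \<noteq> step_tgt s \<and>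
     fst s \<in> inc (step_edge s) \<and> step_tgt s \<in> inc (step_edge s) \<and> fst s \<in> V \<and> step_tgt s \<in> V"

definition closed_trail ::
  "'v set \<Rightarrow> 'e set \<Rightarrow> ('e \<Rightarrow> 'v set) \<Rightarrow> ('v \<times> 'e \<times> 'v) list \<Rightarrow> bool" where
  "closed_trail V E inc S \<longleftrightarrow> S \<noteq> [] \<and> (\<forall>s\<in>set S. valid_step V E inc s) \<and>
     (\<exists>a. steps_chain a S a) \<and> distinct (map step_edge S)"

definition trail_lists :: "('v \<times> 'e \<times> 'v) list \<Rightarrow> 'v list \<times> 'e list" where
  "trail_lists S = (map fst S @ [fst (hd S)], map step_edge S)"

lemma steps_chain_append:
  "steps_chain a (S1 @ S2) b \<longleftrightarrow> (\<exists>m. steps_chain a S1 m \<and> steps_chain m S2 b)"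
proof (induction S1 arbitrary: a)
  case (Cons s S1)
  obtain u e w where "s = (u, e, w)" by (cases s)
  with Cons[of w] show ?case by auto
qed simp

lemma steps_chain_Cons: "steps_chain a (s # S) b \<longleftrightarrow> fst s = a \<and> steps_chain (step_tgt s) S b"
  by (cases s) (auto simp: step_tgt_def)

lemma steps_chain_hd: "steps_chain a S b \<Longrightarrow> S \<noteq> [] \<Longrightarrow> fst (hd S) = a"
  by (cases S) (auto simp: steps_chain_Cons)

lemma steps_chain_nth:
  "steps_chain a S b \<Longrightarrow> Suc i < length S \<Longrightarrow> step_tgt (S ! i) = fst (S ! Suc i)"
proof (induction S arbitrary: a i)
  case (Cons s S)
  then have c: "steps_chain (step_tgt s) S b" by (simp add: steps_chain_Cons)
  show ?case
  proof (cases i)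
    case 0
    with c Cons.prems steps_chain_hd[OF c] show ?thesis by (cases S) auto
  next
    case (Suc j)
    with Cons.IH[OF c, of j] Cons.prems show ?thesis by simp
  qed
qed simp

lemma steps_chain_last: "steps_chain a S b \<Longrightarrow> S \<noteq> [] \<Longrightarrow> step_tgt (last S) = b"
proof (induction S arbitrary: a)
  case (Cons s S)
  then have "steps_chain (step_tgt s) S b" by (simp add: steps_chain_Cons)
  with Cons.IH show ?case by (cases "S = []") auto
qed simp

lemma steps_chain_upt:
  "k \<le> n \<Longrightarrow> steps_chain (vs ! k) (map (\<lambda>i. (vs ! i, es ! i, vs ! Suc i)) [k..<n]) (vs ! n)"
proof (induction "n - k" arbitrary: k)
  case (Suc d)
  then have "[k..<n] = k # [Suc k..<n]" by (simp add: upt_conv_Cons)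
  with Suc.hyps(1)[of "Suc k"] Suc.hyps(2) show ?case by simp
qed simp

lemma closed_trail_chain: "closed_trail V E inc S \<Longrightarrow> steps_chain (fst (hd S)) S (fst (hd S))"
  unfolding closed_trail_def using steps_chain_hd by metis

lemma closed_trail_length:
  assumes "closed_trail V E inc S"
  shows "length S \<ge> 2"
proof (rule ccontr)
  assume "\<not> length S \<ge> 2"
  moreover have "S \<noteq> []" using assms unfolding closed_trail_def by blast
  ultimately obtain s where S: "S = [s]" by (cases S) (auto simp: Suc_le_eq)
  with closed_trail_chain[OF assms] have "fst s = step_tgt s" by (simp add: steps_chain_Cons)
  moreover have "valid_step V E inc s" using assms S unfolding closed_trail_def by simp
  ultimately show False unfolding valid_step_def by simp
qed

lemma closed_trail_mono:
  "closed_trail V' E' inc S \<Longrightarrow> V' \<subseteq> V \<Longrightarrow> E' \<subseteq> E \<Longrightarrow> closed_trail V E inc S"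
  unfolding closed_trail_def valid_step_def by blast

lemma closed_trail_edges: "closed_trail V E inc S \<Longrightarrow> step_edge ` set S \<subseteq> E"
  unfolding closed_trail_def valid_step_def by blast

lemma trail_lists_sets:
  assumes "S \<noteq> []"
  shows "set (fst (trail_lists S)) = fst ` set S" "set (snd (trail_lists S)) = step_edge ` set S"
  using assms by (auto simp: trail_lists_def)

lemma closed_trail_lists:
  assumes "closed_trail V E inc S"
  shows "closed_strict_trail V E inc (fst (trail_lists S)) (snd (trail_lists S))"
proof -
  define vs where "vs = map fst S @ [fst (hd S)]"
  define es where "es = map step_edge S"
  have ne: "S \<noteq> []" using assms unfolding closed_trail_def by blast
  have ch: "steps_chain (fst (hd S)) S (fst (hd S))" by (rule closed_trail_chain[OF assms])
  have vs_i: "vs ! i = fst (S ! i)" if "i < length S" for i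
    using that unfolding vs_def by (simp add: nth_append)
  have vs_Suc: "vs ! Suc i = step_tgt (S ! i)" if "i < length S" for i
  proof (cases "Suc i < length S")
    case True
    then show ?thesis using steps_chain_nth[OF ch True] vs_i by simp
  next
    case False
    with that have i: "Suc i = length S" by simp
    then have "last S = S ! i" using ne by (simp add: last_conv_nth flip: i)
    with i show ?thesis using steps_chain_last[OF ch ne] unfolding vs_def by (simp add: nth_append)
  qed
  have vst: "\<forall>s\<in>set S. valid_step V E inc s" using assms unfolding closed_trail_def by blast
  have "walk V E inc vs es"
    unfolding walk_def
  proof (intro conjI allI impI)
    show "length vs = Suc (length es)" unfolding vs_def es_def by simp
    show "set vs \<subseteq> V" unfolding vs_def using vst ne unfolding valid_step_def by auto
    fix i assume "i < length es"
    then have i: "i < length S" unfolding es_def by simp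
    then have "valid_step V E inc (S ! i)" using vst by simp
    then show "es ! i \<in> E" "vs ! i \<noteq> vs ! Suc i" "vs ! i \<in> inc (es ! i)" "vs ! Suc i \<in> inc (es ! i)"
      using vs_i[OF i] vs_Suc[OF i] i unfolding es_def valid_step_def by simp_all
  qed
  moreover have "closed_walk vs es"
    unfolding closed_walk_def vs_def es_def using closed_trail_length[OF assms] ne by (cases S) auto
  moreover have "distinct es" using assms unfolding closed_trail_def es_def by blast
  ultimately show ?thesis unfolding closed_strict_trail_def trail_lists_def vs_def es_def by simp
qed

lemma closed_strict_trail_steps:
  assumes "closed_strict_trail V E inc vs es"
  shows "\<exists>S. closed_trail V E inc S \<and> trail_lists S = (vs, es)"
proof -
  define n where "n = length es"
  define S where "S = map (\<lambda>i. (vs ! i, es ! i, vs ! Suc i)) [0..<n]"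
  have w: "walk V E inc vs es" and cw: "closed_walk vs es" and d: "distinct es"
    using assms unfolding closed_strict_trail_def by auto
  have len: "length vs = Suc n" using w unfolding walk_def n_def by simp
  have n2: "n \<ge> 2" using cw unfolding closed_walk_def n_def by simp
  have "hd vs = vs ! 0" "last vs = vs ! n" using hd_last_conv_nth[OF len] by simp_all
  then have closed: "vs ! 0 = vs ! n" using cw unfolding closed_walk_def by simp
  have ch: "steps_chain (vs ! 0) S (vs ! 0)"
    using steps_chain_upt[of 0 n vs es] closed unfolding S_def by simp
  have es_eq: "map step_edge S = es" unfolding S_def n_def step_edge_def by (intro nth_equalityI) auto
  have "valid_step V E inc s" if "s \<in> set S" for s
  proof -
    from that obtain i where i: "i < n" "s = (vs ! i, es ! i, vs ! Suc i)" unfolding S_def by auto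
    moreover have "vs ! i \<in> V" "vs ! Suc i \<in> V" using w i len unfolding walk_def
      by (metis Suc_mono less_SucI nth_mem subsetD)+
    ultimately show ?thesis using w unfolding walk_def n_def valid_step_def step_edge_def step_tgt_def
      by simp
  qed
  moreover have "S \<noteq> []" unfolding S_def using n2 by simp
  ultimately have "closed_trail V E inc S" unfolding closed_trail_def using ch d es_eq by auto
  moreover have "map fst S @ [fst (hd S)] = vs"
  proof -
    have "map fst S = take n vs" unfolding S_def using len by (intro nth_equalityI) auto
    moreover have "fst (hd S) = vs ! n" unfolding S_def using n2 closed by (simp add: upt_conv_Cons)
    ultimately show ?thesis using len by (metis lessI take_Suc_conv_app_nth take_all_iff le_refl)
  qed
  ultimately show ?thesis unfolding trail_lists_def using es_eq by auto
qed

lemma closed_trail_rotate: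
  assumes "closed_trail V E inc S" "s \<in> set S"
  shows "\<exists>S'. closed_trail V E inc S' \<and> set S' = set S \<and> steps_chain (fst s) S' (fst s)"
proof -
  obtain S1 S2 where S: "S = S1 @ s # S2" using split_list[OF assms(2)] by blast
  obtain a where "steps_chain a S a" using assms(1) unfolding closed_trail_def by blast
  then obtain m where m: "steps_chain a S1 m" "steps_chain m (s # S2) a"
    using S by (auto simp: steps_chain_append)
  then have "steps_chain (fst s) ((s # S2) @ S1) (fst s)"
    unfolding steps_chain_append by (auto simp: steps_chain_Cons)
  moreover have "distinct (map step_edge ((s # S2) @ S1))" "set ((s # S2) @ S1) = set S"
    using assms(1) S unfolding closed_trail_def by auto
  ultimately show ?thesis using assms(1) unfolding closed_trail_def
    by (metis Nil_is_append_conv list.distinct(1))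
qed

lemma closed_trail_splice:
  assumes S1: "closed_trail V E inc S1" and S2: "closed_trail V E inc S2"
    and disj: "step_edge ` set S1 \<inter> step_edge ` set S2 = {}"
    and a: "a \<in> fst ` set S1" "a \<in> fst ` set S2"
  shows "\<exists>M. closed_trail V E inc M \<and> set M = set S1 \<union> set S2"
proof -
  obtain s1 where s1: "s1 \<in> set S1" "fst s1 = a" using a(1) by blast
  obtain s2 where s2: "s2 \<in> set S2" "fst s2 = a" using a(2) by blast
  obtain T1 where T1: "closed_trail V E inc T1" "set T1 = set S1" "steps_chain a T1 a"
    using closed_trail_rotate[OF S1 s1(1)] s1(2) by blast
  obtain T2 where T2: "closed_trail V E inc T2" "set T2 = set S2" "steps_chain a T2 a"
    using closed_trail_rotate[OF S2 s2(1)] s2(2) by blast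
  have "steps_chain a (T1 @ T2) a" unfolding steps_chain_append using T1(3) T2(3) by blast
  moreover have "distinct (map step_edge (T1 @ T2))" using T1 T2 disj unfolding closed_trail_def by auto
  ultimately have "closed_trail V E inc (T1 @ T2)" using T1 T2 unfolding closed_trail_def by auto
  with T1(2) T2(2) show ?thesis by (metis set_append)
qed

lemma closed_trail_finite:
  assumes "finite V" "finite E"
  shows "finite {S. closed_trail V E inc S}"
proof (rule finite_subset)
  show "{S. closed_trail V E inc S} \<subseteq> {S. set S \<subseteq> V \<times> E \<times> V \<and> length S \<le> card E}"
  proof
    fix S assume "S \<in> {S. closed_trail V E inc S}"
    then have S: "closed_trail V E inc S" by simp
    then have "set S \<subseteq> V \<times> E \<times> V"
      unfolding closed_trail_def valid_step_def step_edge_def step_tgt_def by force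
    moreover have "length S = card (step_edge ` set S)"
      using S unfolding closed_trail_def by (metis distinct_card length_map set_map)
    moreover have "card (step_edge ` set S) \<le> card E"
      using closed_trail_edges[OF S] assms(2) by (rule card_mono[rotated])
    ultimately show "S \<in> {S. set S \<subseteq> V \<times> E \<times> V \<and> length S \<le> card E}" by simp
  qed
  show "finite {S. set S \<subseteq> V \<times> E \<times> V \<and> length S \<le> card E}"
    using finite_lists_length_le[of "V \<times> E \<times> V" "card E"] assms by simp
qed

text \<open>Between two consecutive visits of a block, a trail only uses edges outside the block,
  so it returns to the vertex it left.\<close>

lemma steps_chain_filter_block:
  assumes H: "hypergraph V E inc" and B: "block V E inc VB EB"
    and S: "\<forall>s\<in>set S. valid_step V E inc s" "steps_chain a S b" and b: "b \<in> VB"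
  shows "\<exists>c\<in>VB. (a, c) \<in> linked inc (E - EB) \<and> steps_chain c (filter (\<lambda>s. step_edge s \<in> EB) S) b"
  using S
proof (induction S arbitrary: a)
  case Nil
  with b show ?case by auto
next
  case (Cons s S)
  have s: "valid_step V E inc s" "fst s = a" and ch: "steps_chain (step_tgt s) S b"
    using Cons.prems by (auto simp: steps_chain_Cons)
  from Cons.IH[OF _ ch] Cons.prems(1) obtain c where
    c: "c \<in> VB" "(step_tgt s, c) \<in> linked inc (E - EB)"
      "steps_chain c (filter (\<lambda>s. step_edge s \<in> EB) S) b"
    by auto
  show ?case
  proof (cases "step_edge s \<in> EB")
    case True
    then have "fst s \<in> VB" "step_tgt s \<in> VB"
      using s(1) blockD(2)[OF B] unfolding valid_step_def hypergraph_def by blast+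
    then have "step_tgt s = c" using c block_no_outside_link[OF H B] by blast
    with True s(2) c(3) \<open>fst s \<in> VB\<close> show ?thesis by (auto simp: steps_chain_Cons)
  next
    case False
    with s have "(a, step_tgt s) \<in> linked inc (E - EB)"
      using linked_edge[of "step_edge s" "E - EB" a inc] unfolding valid_step_def by blast
    with c False show ?thesis by (auto intro: rtrancl_trans)
  qed
qed

lemma closed_trail_restrict:
  assumes H: "hypergraph V E inc" and B: "block V E inc VB EB"
    and S: "closed_trail V E inc S" and meets: "\<exists>s\<in>set S. step_edge s \<in> EB"
  shows "\<exists>R. closed_trail VB EB inc R \<and> set R = {s \<in> set S. step_edge s \<in> EB} \<and>
    fst ` set S \<inter> VB \<subseteq> fst ` set R"
proof -
  have incB: "e \<in> EB \<Longrightarrow> inc e \<subseteq> VB" for e using blockD(2)[OF B] unfolding hypergraph_def by blast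
  let ?R = "\<lambda>S'. filter (\<lambda>s. step_edge s \<in> EB) S'"
  have rotated: "closed_trail VB EB inc (?R S') \<and> set (?R S') = {s \<in> set S. step_edge s \<in> EB} \<and>
      fst s \<in> fst ` set (?R S')"
    if S': "closed_trail V E inc S'" "set S' = set S" "steps_chain (fst s) S' (fst s)" "fst s \<in> VB"
    for s S'
  proof -
    have vst: "\<forall>s\<in>set S'. valid_step V E inc s" using S'(1) unfolding closed_trail_def by blast
    obtain c where "c \<in> VB" "(fst s, c) \<in> linked inc (E - EB)" "steps_chain c (?R S') (fst s)"
      using steps_chain_filter_block[OF H B vst S'(3,4)] by blast
    then have ch: "steps_chain (fst s) (?R S') (fst s)"
      using block_no_outside_link[OF H B] S'(4) by blast
    have set_R: "set (?R S') = {s \<in> set S. step_edge s \<in> EB}" using S'(2) by auto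
    then have ne: "?R S' \<noteq> []"
      using meets by (metis (mono_tags, lifting) empty_iff empty_set mem_Collect_eq)
    have "\<forall>s\<in>set (?R S'). valid_step VB EB inc s" using vst incB unfolding valid_step_def by fastforce
    moreover have "distinct (map step_edge (?R S'))"
      using S'(1) unfolding closed_trail_def by (simp add: distinct_map_filter)
    ultimately have "closed_trail VB EB inc (?R S')" using ch ne unfolding closed_trail_def by blast
    moreover have "fst s \<in> fst ` set (?R S')"
      using steps_chain_hd[OF ch ne] ne by (metis hd_in_set image_eqI)
    ultimately show ?thesis using set_R by blast
  qed
  obtain s0 where s0: "s0 \<in> set S" "step_edge s0 \<in> EB" using meets by blast
  then have "fst s0 \<in> VB" using S incB unfolding closed_trail_def valid_step_def by blast
  with closed_trail_rotate[OF S s0(1)] rotated obtain R where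
    R: "closed_trail VB EB inc R" "set R = {s \<in> set S. step_edge s \<in> EB}" by blast
  have "fst s \<in> fst ` set R" if "s \<in> set S" "fst s \<in> VB" for s
    using closed_trail_rotate[OF S that(1)] rotated[of _ s] that(2) R(2) by force
  with R show ?thesis by blast
qed

section \<open>Families of closed trails\<close>

definition edge_disjoint :: "('v \<times> 'e \<times> 'v) list set \<Rightarrow> bool" where
  "edge_disjoint F \<longleftrightarrow>
     (\<forall>S1\<in>F. \<forall>S2\<in>F. S1 \<noteq> S2 \<longrightarrow> step_edge ` set S1 \<inter> step_edge ` set S2 = {})"

definition anchor_disjoint :: "('v \<times> 'e \<times> 'v) list set \<Rightarrow> bool" where
  "anchor_disjoint F \<longleftrightarrow> (\<forall>S1\<in>F. \<forall>S2\<in>F. S1 \<noteq> S2 \<longrightarrow> fst ` set S1 \<inter> fst ` set S2 = {})"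

definition euler_trail_family ::
  "'v set \<Rightarrow> 'e set \<Rightarrow> ('e \<Rightarrow> 'v set) \<Rightarrow> ('v \<times> 'e \<times> 'v) list set \<Rightarrow> bool" where
  "euler_trail_family V E inc F \<longleftrightarrow> (\<forall>S\<in>F. closed_trail V E inc S) \<and>
     edge_disjoint F \<and> anchor_disjoint F \<and> (\<Union>S\<in>F. step_edge ` set S) = E"

lemma edge_disjoint_insert:
  assumes "edge_disjoint F" "\<And>S. S \<in> F \<Longrightarrow> step_edge ` set M \<inter> step_edge ` set S = {}"
  shows "edge_disjoint (insert M F)"
  using assms unfolding edge_disjoint_def by blast

lemma trail_family_splice:
  assumes F: "\<forall>S\<in>F. closed_trail V E inc S" "edge_disjoint F"
    and S: "S1 \<in> F" "S2 \<in> F" "S1 \<noteq> S2" "a \<in> fst ` set S1" "a \<in> fst ` set S2"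
  obtains M where "closed_trail V E inc M" "set M = set S1 \<union> set S2"
    "edge_disjoint (insert M (F - {S1, S2}))"
proof -
  have disj: "step_edge ` set S1 \<inter> step_edge ` set S2 = {}"
    using F(2) S(1-3) unfolding edge_disjoint_def by blast
  obtain M where M: "closed_trail V E inc M" "set M = set S1 \<union> set S2"
    using closed_trail_splice[OF _ _ disj S(4,5)] F(1) S(1,2) by blast
  have "edge_disjoint (F - {S1, S2})" using F(2) unfolding edge_disjoint_def by blast
  moreover have "step_edge ` set M \<inter> step_edge ` set S = {}" if "S \<in> F - {S1, S2}" for S
  proof -
    have "step_edge ` set S1 \<inter> step_edge ` set S = {}" "step_edge ` set S2 \<inter> step_edge ` set S = {}"
      using F(2) S(1,2) that unfolding edge_disjoint_def by blast+
    then show ?thesis using M(2) by auto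
  qed
  ultimately have "edge_disjoint (insert M (F - {S1, S2}))" by (rule edge_disjoint_insert)
  with M show thesis by (rule that)
qed

lemma trail_family_merge:
  assumes "finite F" "\<forall>S\<in>F. closed_trail V E inc S" "edge_disjoint F"
  shows "\<exists>F'. (\<forall>S\<in>F'. closed_trail V E inc S) \<and> edge_disjoint F' \<and> anchor_disjoint F' \<and>
    (\<Union>S\<in>F'. step_edge ` set S) = (\<Union>S\<in>F. step_edge ` set S) \<and> (\<forall>S\<in>F. \<exists>S'\<in>F'. set S \<subseteq> set S')"
  using assms
proof (induction "card F" arbitrary: F rule: less_induct)
  case less
  show ?case
  proof (cases "anchor_disjoint F")
    case False
    then obtain S1 S2 a where S: "S1 \<in> F" "S2 \<in> F" "S1 \<noteq> S2" "a \<in> fst ` set S1" "a \<in> fst ` set S2"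
      unfolding anchor_disjoint_def by blast
    obtain M where M: "closed_trail V E inc M" "set M = set S1 \<union> set S2"
      and disj: "edge_disjoint (insert M (F - {S1, S2}))"
      using trail_family_splice[OF less.prems(2,3) S] by blast
    define F2 where "F2 = insert M (F - {S1, S2})"
    have smaller: "card F2 < card F"
    proof -
      have "card (F - {S1, S2}) = card F - 2" using S less.prems(1) by (simp add: card_Diff_subset)
      moreover have "card {S1, S2} \<le> card F" using S(1,2) less.prems(1) by (intro card_mono) auto
      ultimately show ?thesis unfolding F2_def using S(3) less.prems(1) by (auto simp: card_insert_if)
    qed
    have "finite F2" "\<forall>S\<in>F2. closed_trail V E inc S"
      unfolding F2_def using less.prems(1,2) M(1) by auto
    from less.hyps[OF smaller this disj[folded F2_def]] obtain F' where
      F': "\<forall>S\<in>F'. closed_trail V E inc S" "edge_disjoint F'" "anchor_disjoint F'"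
        "(\<Union>S\<in>F'. step_edge ` set S) = (\<Union>S\<in>F2. step_edge ` set S)"
        "\<forall>S\<in>F2. \<exists>S'\<in>F'. set S \<subseteq> set S'"
      by (elim exE conjE) (rule that; assumption)
    have "(\<Union>S\<in>F2. step_edge ` set S) = (\<Union>S\<in>F. step_edge ` set S)"
      unfolding F2_def using M(2) S(1,2) by auto
    moreover have "\<exists>S'\<in>F'. set S \<subseteq> set S'" if "S \<in> F" for S
    proof (cases "S = S1 \<or> S = S2")
      case True
      moreover obtain S' where "S' \<in> F'" "set M \<subseteq> set S'" using F'(5) unfolding F2_def by blast
      ultimately show ?thesis using M(2) by blast
    qed (use that F'(5) in \<open>auto simp: F2_def\<close>)
    ultimately show ?thesis using F'(1-4) by auto
  qed (use less.prems in blast)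
qed

lemma closed_trail_lists_sets:
  assumes "closed_trail V E inc S"
  shows "set (fst (trail_lists S)) = fst ` set S" "set (snd (trail_lists S)) = step_edge ` set S"
  using assms trail_lists_sets unfolding closed_trail_def by blast+

lemma euler_family_of_trails:
  assumes "euler_trail_family V E inc F"
  shows "euler_family V E inc (trail_lists ` F)"
proof -
  have F: "\<forall>S\<in>F. closed_trail V E inc S" "edge_disjoint F" "anchor_disjoint F"
    and cover: "(\<Union>S\<in>F. step_edge ` set S) = E"
    using assms unfolding euler_trail_family_def by auto
  show ?thesis
    unfolding euler_family_def
  proof (intro conjI ballI impI)
    fix T assume "T \<in> trail_lists ` F"
    then show "closed_strict_trail V E inc (fst T) (snd T)" using closed_trail_lists F(1) by blast
  next
    fix e assume "e \<in> E"
    then obtain S where S: "S \<in> F" "e \<in> step_edge ` set S" using cover by blast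
    show "\<exists>!T. T \<in> trail_lists ` F \<and> e \<in> set (snd T)"
    proof (rule ex1I[of _ "trail_lists S"])
      show "trail_lists S \<in> trail_lists ` F \<and> e \<in> set (snd (trail_lists S))"
        using S closed_trail_lists_sets(2) F(1) by blast
    next
      fix T assume T: "T \<in> trail_lists ` F \<and> e \<in> set (snd T)"
      then obtain S' where S': "S' \<in> F" "T = trail_lists S'" by blast
      then have "e \<in> step_edge ` set S'" using T closed_trail_lists_sets(2) F(1) by blast
      then have "S' = S" using F(2) S S'(1) unfolding edge_disjoint_def by blast
      with S' show "T = trail_lists S" by simp
    qed
  next
    fix T1 T2 assume T: "T1 \<in> trail_lists ` F" "T2 \<in> trail_lists ` F" "T1 \<noteq> T2"
    then obtain S1 S2 where S: "S1 \<in> F" "S2 \<in> F" "T1 = trail_lists S1" "T2 = trail_lists S2" "S1 \<noteq> S2"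
      by blast
    then have "fst ` set S1 \<inter> fst ` set S2 = {}" using F(3) unfolding anchor_disjoint_def by blast
    with S show "set (fst T1) \<inter> set (fst T2) = {}" using closed_trail_lists_sets(1) F(1) by metis
  qed
qed

lemma closed_strict_trail_edges: "closed_strict_trail V E inc vs es \<Longrightarrow> set es \<subseteq> E"
  unfolding closed_strict_trail_def walk_def by (metis in_set_conv_nth subsetI)

lemma euler_family_edges_disjoint:
  assumes F: "euler_family V E inc F" and T: "T1 \<in> F" "T2 \<in> F" "T1 \<noteq> T2"
  shows "set (snd T1) \<inter> set (snd T2) = {}"
proof (rule ccontr)
  assume "set (snd T1) \<inter> set (snd T2) \<noteq> {}"
  then obtain e where e: "e \<in> set (snd T1)" "e \<in> set (snd T2)" by blast
  have "closed_strict_trail V E inc (fst T1) (snd T1)" using F T(1) unfolding euler_family_def by blast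
  with e(1) have "e \<in> E" using closed_strict_trail_edges by blast
  with F T e show False unfolding euler_family_def by metis
qed

lemma euler_family_cover:
  assumes "euler_family V E inc F"
  shows "(\<Union>T\<in>F. set (snd T)) = E"
proof
  show "(\<Union>T\<in>F. set (snd T)) \<subseteq> E"
    using assms closed_strict_trail_edges unfolding euler_family_def by blast
  show "E \<subseteq> (\<Union>T\<in>F. set (snd T))"
    using assms unfolding euler_family_def by (blast dest: ex1_implies_ex)
qed

lemma euler_trail_family_of_euler_family:
  assumes F: "euler_family V E inc F"
  shows "\<exists>G. euler_trail_family V E inc G"
proof -
  define steps where "steps T = (SOME S. closed_trail V E inc S \<and> trail_lists S = T)" for T
  have steps: "closed_trail V E inc (steps T)" "trail_lists (steps T) = T" if "T \<in> F" for T
  proof -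
    have "closed_strict_trail V E inc (fst T) (snd T)" using F that unfolding euler_family_def by blast
    then have "\<exists>S. closed_trail V E inc S \<and> trail_lists S = T"
      using closed_strict_trail_steps[of V E inc "fst T" "snd T"] by simp
    then show "closed_trail V E inc (steps T)" "trail_lists (steps T) = T"
      unfolding steps_def by (metis (mono_tags, lifting) someI_ex)+
  qed
  have sets: "set (fst T) = fst ` set (steps T)" "set (snd T) = step_edge ` set (steps T)"
    if "T \<in> F" for T
    using closed_trail_lists_sets[OF steps(1)[OF that]] steps(2)[OF that] by simp_all
  have "edge_disjoint (steps ` F)"
    unfolding edge_disjoint_def
  proof (intro ballI impI)
    fix S1 S2 assume "S1 \<in> steps ` F" "S2 \<in> steps ` F" "S1 \<noteq> S2"
    then obtain T1 T2 where T: "T1 \<in> F" "T2 \<in> F" "S1 = steps T1" "S2 = steps T2" "T1 \<noteq> T2" by blast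
    then show "step_edge ` set S1 \<inter> step_edge ` set S2 = {}"
      using euler_family_edges_disjoint[OF F T(1,2,5)] sets(2) by simp
  qed
  moreover have "anchor_disjoint (steps ` F)"
    unfolding anchor_disjoint_def
  proof (intro ballI impI)
    fix S1 S2 assume "S1 \<in> steps ` F" "S2 \<in> steps ` F" "S1 \<noteq> S2"
    then obtain T1 T2 where T: "T1 \<in> F" "T2 \<in> F" "S1 = steps T1" "S2 = steps T2" "T1 \<noteq> T2" by blast
    then show "fst ` set S1 \<inter> fst ` set S2 = {}"
      using F sets unfolding euler_family_def by metis
  qed
  moreover have "(\<Union>S\<in>steps ` F. step_edge ` set S) = E"
    using euler_family_cover[OF F] sets(2) by auto
  moreover have "\<forall>S\<in>steps ` F. closed_trail V E inc S" using steps(1) by blast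
  ultimately show ?thesis unfolding euler_trail_family_def by blast
qed

lemma has_euler_family_iff_trails:
  "has_euler_family V E inc \<longleftrightarrow> (\<exists>F. euler_trail_family V E inc F)"
  unfolding has_euler_family_def
  using euler_trail_family_of_euler_family euler_family_of_trails by blast

lemma euler_tour_iff_trail:
  "(\<exists>vs es. euler_tour V E inc vs es \<and> P (set vs)) \<longleftrightarrow>
    (\<exists>S. closed_trail V E inc S \<and> step_edge ` set S = E \<and> P (fst ` set S))"
proof
  assume "\<exists>vs es. euler_tour V E inc vs es \<and> P (set vs)"
  then obtain vs es where T: "closed_strict_trail V E inc vs es" "set es = E" "P (set vs)"
    unfolding euler_tour_def by blast
  obtain S where S: "closed_trail V E inc S" "trail_lists S = (vs, es)"
    using closed_strict_trail_steps[OF T(1)] by blast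
  with closed_trail_lists_sets[OF S(1)] T(2,3)
  show "\<exists>S. closed_trail V E inc S \<and> step_edge ` set S = E \<and> P (fst ` set S)" by auto
next
  assume "\<exists>S. closed_trail V E inc S \<and> step_edge ` set S = E \<and> P (fst ` set S)"
  then obtain S where S: "closed_trail V E inc S" "step_edge ` set S = E" "P (fst ` set S)" by blast
  with closed_trail_lists[OF S(1)] closed_trail_lists_sets[OF S(1)]
  show "\<exists>vs es. euler_tour V E inc vs es \<and> P (set vs)" unfolding euler_tour_def by metis
qed

section \<open>Euler families and tours of blocks\<close>

lemma steps_chain_switch:
  "steps_chain a S b \<Longrightarrow> S \<noteq> [] \<Longrightarrow> P (hd S) \<Longrightarrow> \<exists>s\<in>set S. \<not> P s \<Longrightarrow>
    \<exists>s1\<in>set S. \<exists>s2\<in>set S. P s1 \<and> \<not> P s2 \<and> step_tgt s1 = fst s2"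
proof (induction S arbitrary: a)
  case (Cons s S)
  have ch: "steps_chain (step_tgt s) S b" using Cons.prems(1) by (simp add: steps_chain_Cons)
  have "P s" "S \<noteq> []" using Cons.prems(3,4) by auto
  then have "fst (hd S) = step_tgt s" "hd S \<in> set S" using steps_chain_hd[OF ch] by auto
  show ?case
  proof (cases "P (hd S)")
    case True
    with Cons.prems(4) \<open>P s\<close> Cons.IH[OF ch \<open>S \<noteq> []\<close>] show ?thesis by auto
  next
    case False
    with \<open>P s\<close> \<open>fst (hd S) = step_tgt s\<close> \<open>hd S \<in> set S\<close> show ?thesis by auto
  qed
qed simp

lemma closed_trail_through_separating:
  assumes sep: "separating_vertex_conn V E inc v"
    and S: "closed_trail V E inc S" "step_edge ` set S = E"
  shows "v \<in> fst ` set S"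
proof -
  from sep obtain V1 E1 V2 E2 where d: "hypersubgraph V1 E1 V E inc" "hypersubgraph V2 E2 V E inc"
    "E1 \<noteq> {}" "E2 \<noteq> {}" "E1 \<union> E2 = E" "E1 \<inter> E2 = {}" "V1 \<inter> V2 = {v}"
    unfolding separating_vertex_conn_def by blast
  have inc: "\<forall>g\<in>E1. inc g \<subseteq> V1" "\<forall>g\<in>E2. inc g \<subseteq> V2"
    using d(1,2) unfolding hypersubgraph_def hypergraph_def by blast+
  let ?P = "\<lambda>s. step_edge s \<in> E1"
  have ch: "steps_chain (fst (hd S)) S (fst (hd S))" "S \<noteq> []"
    using S(1) closed_trail_chain unfolding closed_trail_def by blast+
  obtain g1 g2 where "g1 \<in> E1" "g2 \<in> E2" using d(3,4) by blast
  then have ex: "\<exists>s\<in>set S. ?P s" "\<exists>s\<in>set S. \<not> ?P s"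
    using S(2) d(5,6) by (metis IntI empty_iff imageE Un_iff)+
  have "\<exists>s1\<in>set S. \<exists>s2\<in>set S. step_tgt s1 = fst s2 \<and> (?P s1 \<and> \<not> ?P s2 \<or> \<not> ?P s1 \<and> ?P s2)"
  proof (cases "?P (hd S)")
    case True
    from steps_chain_switch[OF ch this ex(2)] show ?thesis by blast
  next
    case False
    from steps_chain_switch[OF ch, of "\<lambda>s. \<not> ?P s", OF False] ex(1) show ?thesis by blast
  qed
  then obtain s1 s2 where s: "s1 \<in> set S" "s2 \<in> set S" "step_tgt s1 = fst s2"
    "?P s1 \<and> \<not> ?P s2 \<or> \<not> ?P s1 \<and> ?P s2" by blast
  have x: "fst s2 \<in> inc (step_edge s1)" "fst s2 \<in> inc (step_edge s2)"
    using S(1) s(1-3) unfolding closed_trail_def valid_step_def by auto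
  have "step_edge s1 \<in> E1 \<union> E2" "step_edge s2 \<in> E1 \<union> E2" using S(2) s(1,2) d(5) by blast+
  with s(4) have "step_edge s1 \<in> E1 \<and> step_edge s2 \<in> E2 \<or> step_edge s1 \<in> E2 \<and> step_edge s2 \<in> E1"
    by blast
  then have "fst s2 \<in> V1 \<inter> V2" using x inc by blast
  with d(7) s(2) show ?thesis by force
qed

lemma disjoint_families_shrink:
  assumes "G \<subseteq> F" "\<And>S. S \<in> G \<Longrightarrow> set (r S) \<subseteq> set S"
  shows "edge_disjoint F \<Longrightarrow> edge_disjoint (r ` G)" "anchor_disjoint F \<Longrightarrow> anchor_disjoint (r ` G)"
proof -
  have pairs: "\<exists>S1 S2. S1 \<in> F \<and> S2 \<in> F \<and> S1 \<noteq> S2 \<and> R1 = r S1 \<and> R2 = r S2 \<and>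
      set R1 \<subseteq> set S1 \<and> set R2 \<subseteq> set S2"
    if "R1 \<in> r ` G" "R2 \<in> r ` G" "R1 \<noteq> R2" for R1 R2
    using that assms by blast
  show "edge_disjoint F \<Longrightarrow> edge_disjoint (r ` G)"
    unfolding edge_disjoint_def
  proof (intro ballI impI)
    fix R1 R2 assume F: "\<forall>S1\<in>F. \<forall>S2\<in>F. S1 \<noteq> S2 \<longrightarrow> step_edge ` set S1 \<inter> step_edge ` set S2 = {}"
      and R: "R1 \<in> r ` G" "R2 \<in> r ` G" "R1 \<noteq> R2"
    from pairs[OF R] obtain S1 S2 where "S1 \<in> F" "S2 \<in> F" "S1 \<noteq> S2"
      "set R1 \<subseteq> set S1" "set R2 \<subseteq> set S2" by blast
    with F show "step_edge ` set R1 \<inter> step_edge ` set R2 = {}" by blast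
  qed
  show "anchor_disjoint F \<Longrightarrow> anchor_disjoint (r ` G)"
    unfolding anchor_disjoint_def
  proof (intro ballI impI)
    fix R1 R2 assume F: "\<forall>S1\<in>F. \<forall>S2\<in>F. S1 \<noteq> S2 \<longrightarrow> fst ` set S1 \<inter> fst ` set S2 = {}"
      and R: "R1 \<in> r ` G" "R2 \<in> r ` G" "R1 \<noteq> R2"
    from pairs[OF R] obtain S1 S2 where "S1 \<in> F" "S2 \<in> F" "S1 \<noteq> S2"
      "set R1 \<subseteq> set S1" "set R2 \<subseteq> set S2" by blast
    with F show "fst ` set R1 \<inter> fst ` set R2 = {}" by blast
  qed
qed

lemma block_has_euler_family:
  assumes H: "hypergraph V E inc" and F: "has_euler_family V E inc" and B: "block V E inc VB EB"
  shows "has_euler_family VB EB inc"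
proof -
  obtain F where F: "\<forall>S\<in>F. closed_trail V E inc S" "edge_disjoint F" "anchor_disjoint F"
    "(\<Union>S\<in>F. step_edge ` set S) = E"
    using F unfolding has_euler_family_iff_trails euler_trail_family_def by blast
  define G where "G = {S \<in> F. \<exists>s\<in>set S. step_edge s \<in> EB}"
  define restr where "restr S = (SOME R. closed_trail VB EB inc R \<and>
    set R = {s \<in> set S. step_edge s \<in> EB} \<and> fst ` set S \<inter> VB \<subseteq> fst ` set R)" for S
  have restr: "closed_trail VB EB inc (restr S)" "set (restr S) = {s \<in> set S. step_edge s \<in> EB}"
    if "S \<in> G" for S
  proof -
    have "S \<in> F" "\<exists>s\<in>set S. step_edge s \<in> EB" using that unfolding G_def by blast+
    from someI_ex[OF closed_trail_restrict[OF H B F(1)[rule_format, OF this(1)] this(2)]]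
    show "closed_trail VB EB inc (restr S)" "set (restr S) = {s \<in> set S. step_edge s \<in> EB}"
      unfolding restr_def by blast+
  qed
  have GF: "G \<subseteq> F" and shrink: "\<And>S. S \<in> G \<Longrightarrow> set (restr S) \<subseteq> set S"
    using restr(2) unfolding G_def by auto
  have "edge_disjoint (restr ` G)" "anchor_disjoint (restr ` G)"
    using disjoint_families_shrink[OF GF shrink] F(2,3) by blast+
  moreover have "(\<Union>S\<in>restr ` G. step_edge ` set S) = EB"
  proof
    show "(\<Union>S\<in>restr ` G. step_edge ` set S) \<subseteq> EB" using restr(2) by auto
    show "EB \<subseteq> (\<Union>S\<in>restr ` G. step_edge ` set S)"
    proof
      fix e assume e: "e \<in> EB"
      then obtain S s where "S \<in> F" "s \<in> set S" "step_edge s = e"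
        using F(4) blockD(6)[OF B] by blast
      moreover from this e have "S \<in> G" unfolding G_def by blast
      ultimately show "e \<in> (\<Union>S\<in>restr ` G. step_edge ` set S)" using restr(2) e by blast
    qed
  qed
  moreover have "\<forall>S\<in>restr ` G. closed_trail VB EB inc S" using restr(1) by blast
  ultimately show ?thesis
    unfolding has_euler_family_iff_trails euler_trail_family_def by (intro exI[of _ "restr ` G"]) simp
qed

lemma euler_trail_familyD:
  assumes "euler_trail_family VB EB inc F" "S \<in> F"
  shows "closed_trail VB EB inc S" "step_edge ` set S \<subseteq> EB"
  using assms closed_trail_edges unfolding euler_trail_family_def by blast+

lemma block_trails_edge_disjoint:
  assumes H: "hypergraph V E inc"
    and T: "\<And>VB EB. block V E inc VB EB \<Longrightarrow> euler_trail_family VB EB inc (T VB EB)"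
  shows "edge_disjoint {S. \<exists>VB EB. block V E inc VB EB \<and> S \<in> T VB EB}"
  unfolding edge_disjoint_def
proof (intro ballI impI)
  fix S1 S2 assume S: "S1 \<in> {S. \<exists>VB EB. block V E inc VB EB \<and> S \<in> T VB EB}"
    "S2 \<in> {S. \<exists>VB EB. block V E inc VB EB \<and> S \<in> T VB EB}" "S1 \<noteq> S2"
  then obtain VB1 EB1 VB2 EB2 where B: "block V E inc VB1 EB1" "S1 \<in> T VB1 EB1"
    "block V E inc VB2 EB2" "S2 \<in> T VB2 EB2"
    by blast
  show "step_edge ` set S1 \<inter> step_edge ` set S2 = {}"
  proof (cases "VB1 = VB2 \<and> EB1 = EB2")
    case True
    with B T[OF B(1)] S(3) show ?thesis unfolding euler_trail_family_def edge_disjoint_def by simp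
  next
    case False
    then have "EB1 \<inter> EB2 = {}" using block_unique[OF H B(1,3)] by blast
    then show ?thesis
      using euler_trail_familyD(2)[OF T B(2)] euler_trail_familyD(2)[OF T B(4)] B(1,3) by blast
  qed
qed

lemma block_trails_union:
  assumes H: "hypergraph V E inc"
    and T: "\<And>VB EB. block V E inc VB EB \<Longrightarrow> euler_trail_family VB EB inc (T VB EB)"
    and G_def: "G = {S. \<exists>VB EB. block V E inc VB EB \<and> S \<in> T VB EB}"
  shows "finite G" "\<forall>S\<in>G. closed_trail V E inc S" "edge_disjoint G"
    "(\<Union>S\<in>G. step_edge ` set S) = E"
proof -
  show G: "\<forall>S\<in>G. closed_trail V E inc S"
  proof
    fix S assume "S \<in> G"
    then obtain VB EB where B: "block V E inc VB EB" "S \<in> T VB EB" unfolding G_def by blast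
    show "closed_trail V E inc S"
      by (rule closed_trail_mono[OF euler_trail_familyD(1)[OF T[OF B(1)] B(2)] blockD(5,6)[OF B(1)]])
  qed
  show fin: "finite G"
    using finite_subset[OF _ closed_trail_finite] G H unfolding hypergraph_def by blast
  show "edge_disjoint G" unfolding G_def by (rule block_trails_edge_disjoint[OF H T])
  show cover: "(\<Union>S\<in>G. step_edge ` set S) = E"
  proof
    show "(\<Union>S\<in>G. step_edge ` set S) \<subseteq> E" using G closed_trail_edges by blast
    show "E \<subseteq> (\<Union>S\<in>G. step_edge ` set S)"
    proof
      fix e assume "e \<in> E"
      then obtain VB EB where B: "block V E inc VB EB" "e \<in> EB" using edge_in_block[OF H] by blast
      then obtain S where "S \<in> T VB EB" "e \<in> step_edge ` set S"
        using T[OF B(1)] unfolding euler_trail_family_def by blast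
      with B(1) show "e \<in> (\<Union>S\<in>G. step_edge ` set S)" unfolding G_def by blast
    qed
  qed
qed

lemma block_trails_merge:
  assumes H: "hypergraph V E inc"
    and T: "\<And>VB EB. block V E inc VB EB \<Longrightarrow> euler_trail_family VB EB inc (T VB EB)"
  obtains F where "euler_trail_family V E inc F"
    "\<And>VB EB S. block V E inc VB EB \<Longrightarrow> S \<in> T VB EB \<Longrightarrow> \<exists>S'\<in>F. set S \<subseteq> set S'"
proof -
  define G where "G = {S. \<exists>VB EB. block V E inc VB EB \<and> S \<in> T VB EB}"
  have G: "finite G" "\<forall>S\<in>G. closed_trail V E inc S" "edge_disjoint G"
    "(\<Union>S\<in>G. step_edge ` set S) = E"
    using block_trails_union[OF H T G_def] by blast+
  from trail_family_merge[OF G(1-3)] obtain F where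
    F: "\<forall>S\<in>F. closed_trail V E inc S" "edge_disjoint F" "anchor_disjoint F"
      "(\<Union>S\<in>F. step_edge ` set S) = (\<Union>S\<in>G. step_edge ` set S)" "\<forall>S\<in>G. \<exists>S'\<in>F. set S \<subseteq> set S'"
    by (elim exE conjE) (rule that; assumption)
  show ?thesis
  proof (rule that)
    show "euler_trail_family V E inc F" using F G(4) unfolding euler_trail_family_def by simp
    show "\<exists>S'\<in>F. set S \<subseteq> set S'" if "block V E inc VB EB" "S \<in> T VB EB" for VB EB S
      using F(5) that unfolding G_def by blast
  qed
qed

lemma has_euler_family_of_blocks:
  assumes H: "hypergraph V E inc"
    and blocks: "\<And>VB EB. block V E inc VB EB \<Longrightarrow> has_euler_family VB EB inc"
  shows "has_euler_family V E inc"
proof -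
  define T where "T VB EB = (SOME F. euler_trail_family VB EB inc F)" for VB EB
  have "euler_trail_family VB EB inc (T VB EB)" if "block V E inc VB EB" for VB EB
    using blocks[OF that] someI_ex unfolding has_euler_family_iff_trails T_def by metis
  with block_trails_merge[OF H] show ?thesis unfolding has_euler_family_iff_trails by metis
qed

lemma block_euler_tour:
  assumes H: "hypergraph V E inc" "hconnected V E inc"
    and S: "closed_trail V E inc S" "step_edge ` set S = E" and B: "block V E inc VB EB"
  shows "\<exists>R. closed_trail VB EB inc R \<and> step_edge ` set R = EB \<and>
    (\<forall>v\<in>VB. separating_vertex V E inc v \<longrightarrow> v \<in> fst ` set R)"
proof -
  have "E \<noteq> {}" using S unfolding closed_trail_def by auto
  then have "V = \<Union>(inc ` E)" using hconnected_vertices[OF H] by blast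
  moreover obtain v0 where "v0 \<in> VB" using blockD(2)[OF B] unfolding hypergraph_def by blast
  ultimately have "EB \<noteq> {}" using block_edges_nonempty[OF H(1) B] blockD(5)[OF B] by blast
  then have "\<exists>s\<in>set S. step_edge s \<in> EB" using S(2) blockD(6)[OF B] by blast
  then obtain R where R: "closed_trail VB EB inc R" "set R = {s \<in> set S. step_edge s \<in> EB}"
    "fst ` set S \<inter> VB \<subseteq> fst ` set R"
    using closed_trail_restrict[OF H(1) B S(1)] by blast
  have "step_edge ` set R = EB" using R(2) S(2) blockD(6)[OF B] by auto
  moreover have "v \<in> fst ` set R" if "v \<in> VB" "separating_vertex V E inc v" for v
    using closed_trail_through_separating[OF _ S] separating_vertex_iff_not_overlap_connected[OF H]
      not_overlap_connected_separating[OF H] R(3) that by blast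
  ultimately show ?thesis using R(1) by blast
qed

text \<open>Edges meeting at a vertex x lie in the same member of the merged family: either they
  belong to one block, or x is separating and hence an anchor of both block tours.\<close>

lemma merged_block_tours_cover:
  assumes H: "hypergraph V E inc" "hconnected V E inc"
    and t: "\<And>VB EB. block V E inc VB EB \<Longrightarrow> closed_trail VB EB inc (t VB EB) \<and>
      step_edge ` set (t VB EB) = EB \<and> (\<forall>v\<in>VB. separating_vertex V E inc v \<longrightarrow> v \<in> fst ` set (t VB EB))"
    and F: "euler_trail_family V E inc F" "S1 \<in> F"
    and refine: "\<And>VB EB. block V E inc VB EB \<Longrightarrow> \<exists>S\<in>F. set (t VB EB) \<subseteq> set S"
  shows "step_edge ` set S1 = E"
proof (rule ccontr)
  assume ne: "step_edge ` set S1 \<noteq> E"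
  have F': "\<forall>S\<in>F. closed_trail V E inc S" "edge_disjoint F" "anchor_disjoint F"
    using F(1) unfolding euler_trail_family_def by auto
  have S1: "closed_trail V E inc S1" using F'(1) F(2) by blast
  then have A: "step_edge ` set S1 \<subseteq> E" "step_edge ` set S1 \<noteq> {}"
    using closed_trail_edges[OF S1] S1 unfolding closed_trail_def by auto
  have "\<Union>(inc ` step_edge ` set S1) \<inter> \<Union>(inc ` (E - step_edge ` set S1)) \<noteq> {}"
    using hconnected_partition_meet[OF H, of "step_edge ` set S1" "E - step_edge ` set S1"] A ne
    by blast
  then obtain x e f where xef: "e \<in> step_edge ` set S1" "f \<in> E" "f \<notin> step_edge ` set S1"
    "x \<in> inc e" "x \<in> inc f" by blast
  obtain VBe EBe where Be: "block V E inc VBe EBe" "e \<in> EBe"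
    using edge_in_block[OF H(1)] xef(1) A(1) by blast
  obtain VBf EBf where Bf: "block V E inc VBf EBf" "f \<in> EBf"
    using edge_in_block[OF H(1) xef(2)] by blast
  obtain Se where Se: "Se \<in> F" "set (t VBe EBe) \<subseteq> set Se" using refine[OF Be(1)] by blast
  obtain Sf where Sf: "Sf \<in> F" "set (t VBf EBf) \<subseteq> set Sf" using refine[OF Bf(1)] by blast
  have "e \<in> step_edge ` set Se" using Se(2) t[OF Be(1)] Be(2) by blast
  then have "Se = S1" using F'(2) Se(1) F(2) xef(1) unfolding edge_disjoint_def by blast
  have "f \<in> step_edge ` set Sf" using Sf(2) t[OF Bf(1)] Bf(2) by blast
  then have "Sf \<noteq> S1" using xef(3) by blast
  have "f \<notin> EBe" using Se(2) t[OF Be(1)] xef(3) \<open>Se = S1\<close> by blast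
  then have sep: "separating_vertex V E inc x"
    using block_shared_vertex_separating[OF H Be xef(4) xef(2) _ xef(5)] by blast
  have "x \<in> VBe" "x \<in> VBf"
    using xef(4,5) Be Bf blockD(2) unfolding hypergraph_def by blast+
  then have "x \<in> fst ` set (t VBe EBe)" "x \<in> fst ` set (t VBf EBf)"
    using t[OF Be(1)] t[OF Bf(1)] sep by blast+
  then have "x \<in> fst ` set Se" "x \<in> fst ` set Sf" using Se(2) Sf(2) by blast+
  with F'(3) Se(1) Sf(1) \<open>Se = S1\<close> \<open>Sf \<noteq> S1\<close> show False unfolding anchor_disjoint_def by blast
qed

lemma euler_tour_of_blocks:
  assumes H: "hypergraph V E inc" "hconnected V E inc"
    and tours: "\<And>VB EB. block V E inc VB EB \<Longrightarrow> \<exists>R. closed_trail VB EB inc R \<and>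
      step_edge ` set R = EB \<and> (\<forall>v\<in>VB. separating_vertex V E inc v \<longrightarrow> v \<in> fst ` set R)"
  shows "\<exists>S. closed_trail V E inc S \<and> step_edge ` set S = E"
proof -
  define t where "t VB EB = (SOME R. closed_trail VB EB inc R \<and> step_edge ` set R = EB \<and>
    (\<forall>v\<in>VB. separating_vertex V E inc v \<longrightarrow> v \<in> fst ` set R))" for VB EB
  have t: "closed_trail VB EB inc (t VB EB) \<and> step_edge ` set (t VB EB) = EB \<and>
      (\<forall>v\<in>VB. separating_vertex V E inc v \<longrightarrow> v \<in> fst ` set (t VB EB))"
    if "block V E inc VB EB" for VB EB
    unfolding t_def by (rule someI_ex[OF tours[OF that]])
  have fam: "euler_trail_family VB EB inc {t VB EB}" if "block V E inc VB EB" for VB EB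
    using t[OF that] unfolding euler_trail_family_def edge_disjoint_def anchor_disjoint_def by simp
  obtain F where F: "euler_trail_family V E inc F"
    and merged: "\<And>VB EB S. block V E inc VB EB \<Longrightarrow> S \<in> {t VB EB} \<Longrightarrow> \<exists>S'\<in>F. set S \<subseteq> set S'"
    using block_trails_merge[OF H(1) fam] by metis
  have refine: "\<exists>S\<in>F. set (t VB EB) \<subseteq> set S" if "block V E inc VB EB" for VB EB
    using merged[OF that] by blast
  obtain VB EB where B: "block V E inc VB EB" using block_exists[OF H(1)] by blast
  have "t VB EB \<noteq> []" "step_edge ` set (t VB EB) \<subseteq> E"
    using t[OF B] blockD(6)[OF B] unfolding closed_trail_def by auto
  then have "E \<noteq> {}" by (cases "t VB EB") auto
  then obtain S1 where "S1 \<in> F" using F unfolding euler_trail_family_def by blast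
  moreover from this have "closed_trail V E inc S1" using F unfolding euler_trail_family_def by blast
  ultimately show ?thesis using merged_block_tours_cover[OF H t F _ refine] by blast
qed

theorem theorem2p21:
  fixes V :: "'v set" and E :: "'e set" and inc :: "'e \<Rightarrow> 'v set"
  assumes "hypergraph V E inc"
  shows "(has_euler_family V E inc \<longleftrightarrow>
            (\<forall>VB EB. block V E inc VB EB \<longrightarrow> has_euler_family VB EB inc)) \<and>
         (hconnected V E inc \<longrightarrow>
           (has_euler_tour V E inc \<longleftrightarrow>
            (\<forall>VB EB. block V E inc VB EB \<longrightarrow>
               (\<exists>vs es. euler_tour VB EB inc vs es \<and>
                  (\<forall>v\<in>VB. separating_vertex V E inc v \<longrightarrow> v \<in> set vs)))))"
proof (intro conjI impI)
  show "has_euler_family V E inc \<longleftrightarrow>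
      (\<forall>VB EB. block V E inc VB EB \<longrightarrow> has_euler_family VB EB inc)"
    using block_has_euler_family[OF assms] has_euler_family_of_blocks[OF assms] by meson
next
  assume conn: "hconnected V E inc"
  have tour: "has_euler_tour V E inc \<longleftrightarrow> (\<exists>S. closed_trail V E inc S \<and> step_edge ` set S = E)"
    using euler_tour_iff_trail[of V E inc "\<lambda>_. True"] unfolding has_euler_tour_def by simp
  have block_tour: "(\<exists>vs es. euler_tour VB EB inc vs es \<and>
        (\<forall>v\<in>VB. separating_vertex V E inc v \<longrightarrow> v \<in> set vs)) \<longleftrightarrow>
      (\<exists>R. closed_trail VB EB inc R \<and> step_edge ` set R = EB \<and>
        (\<forall>v\<in>VB. separating_vertex V E inc v \<longrightarrow> v \<in> fst ` set R))" for VB EB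
    by (rule euler_tour_iff_trail)
  show "has_euler_tour V E inc \<longleftrightarrow>
      (\<forall>VB EB. block V E inc VB EB \<longrightarrow> (\<exists>vs es. euler_tour VB EB inc vs es \<and>
        (\<forall>v\<in>VB. separating_vertex V E inc v \<longrightarrow> v \<in> set vs)))"
    unfolding tour block_tour
  proof
    assume "\<exists>S. closed_trail V E inc S \<and> step_edge ` set S = E"
    then show "\<forall>VB EB. block V E inc VB EB \<longrightarrow> (\<exists>R. closed_trail VB EB inc R \<and>
        step_edge ` set R = EB \<and> (\<forall>v\<in>VB. separating_vertex V E inc v \<longrightarrow> v \<in> fst ` set R))"
      using block_euler_tour[OF assms conn] by blast
  qed (rule euler_tour_of_blocks[OF assms conn], blast)
qed

end
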